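(* Let $\Sigma$ be a two-dimensional surface immersed in $\mathbb R^n$ and let $\omega$ be a Gaussian Harmonic one Form (GHF) on $\Sigma$ with dual tangent vector field $W$. Let $\{\nu_\alpha\}$ be a local orthonormal frame of the normal bundle. Then for every tangent vector $v$, $$\mathcal L^\Sigma \omega(v) = K\,\omega(v) + \tfrac12\,\omega(v) - \sum_\alpha \frac{\langle x,\nu_\alpha\rangle}{2}\,A^{\nu_\alpha}(W,v).$$ If moreover $\Sigma$ is a self-shrinker, then for every tangent vector $v$, $$\mathcal L^\Sigma \omega(v) = \tfrac12\,\omega(v) - \sum_\alpha\sum_{j=1}^2 A^{\nu_\alpha}(W,e_j)\,A^{\nu_\alpha}(e_j,v).$$
   Context: $\Sigma$ is a two-dimensional surface immersed in $\mathbb R^n$ with induced metric; $x$ is the position vector, $x^T$ and $x^N$ its tangential and normal projections. $\nabla^E$ is the Euclidean connection, $\nabla^\Sigma=(\nabla^E)^T$ the Levi-Civita connection of $\Sigma$ (also on tensors), $\nabla^N=(\nabla^E)^N$ the normal connection. $\{e_1,e_2\}$ denotes a local orthonormal tangent frame. For a unit normal field $\nu$ and tangent $X,Y$, $A^\nu(X,Y)=\langle\nabla^E_X\nu,Y\rangle$. The mean curvature vector is $H=\sum_\alpha(\operatorname{tr}A^{\nu_\alpha})\nu_\alpha$. $K$ is the Gauss curvature of $\Sigma$. $\Sigma$ is a self-shrinker if $H=\tfrac12 x^N$. For a one-form $\omega$, its dual vector field $W$ is the tangent vector field with $\omega(v)=\langle W,v\rangle$. A Gaussian Harmonic one Form (GHF)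 is a one-form $\omega$ on $\Sigma$ that is closed ($\nabla^\Sigma\omega$ is symmetric) and satisfies $\operatorname{tr}_\Sigma\nabla^\Sigma\omega=\sum_i(\nabla^\Sigma_{e_i}\omega)(e_i)=\tfrac12\,\omega(x^T)$. On tensors, $\mathcal L^\Sigma T=\sum_{i}\nabla^{\Sigma,2}_{e_i,e_i}T-\tfrac12\nabla^\Sigma_{x^T}T$. *)

theory Defs
  imports "HOL-Analysis.Analysis"
begin

text \<open>Local model of an immersed surface: a parametrization F : U \<subseteq> R^2 \<rightarrow> R^n,
  U open.  Position vector x = F p.  All geometric objects are expressed through
  partial derivatives in the parameter domain.\<close>

definition pd :: "(real^2 \<Rightarrow> 'b::real_normed_vector) \<Rightarrow> 2 \<Rightarrow> real^2 \<Rightarrow> 'b" where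
  "pd f i p = vector_derivative (\<lambda>t. f (p + t *\<^sub>R axis i 1)) (at 0)"

fun Ck :: "nat \<Rightarrow> (real^2) set \<Rightarrow> (real^2 \<Rightarrow> 'b::real_normed_vector) \<Rightarrow> bool" where
  "Ck 0 U f = continuous_on U f"
| "Ck (Suc k) U f = (f differentiable_on U \<and> (\<forall>i. Ck k U (pd f i)))"

definition smooth_on2 :: "(real^2) set \<Rightarrow> (real^2 \<Rightarrow> 'b::real_normed_vector) \<Rightarrow> bool" where
  "smooth_on2 U f = (\<forall>k. Ck k U f)"

definition immersion :: "(real^2) set \<Rightarrow> (real^2 \<Rightarrow> real^'n) \<Rightarrow> bool" where
  "immersion U F = (open U \<and> smooth_on2 U F \<and>
     (\<forall>p\<in>U. independent {pd F 1 p, pd F 2 p} \<and> pd F 1 p \<noteq> pd F 2 p))"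

definition Tsp :: "(real^2 \<Rightarrow> real^'n) \<Rightarrow> real^2 \<Rightarrow> (real^'n) set" where
  "Tsp F p = span {pd F 1 p, pd F 2 p}"

definition dF :: "(real^2 \<Rightarrow> real^'n) \<Rightarrow> real^2 \<Rightarrow> real^2 \<Rightarrow> real^'n" where
  "dF F p \<xi> = (\<Sum>i\<in>UNIV. (\<xi> $ i) *\<^sub>R pd F i p)"

definition crd :: "(real^2 \<Rightarrow> real^'n) \<Rightarrow> real^2 \<Rightarrow> real^'n \<Rightarrow> real^2" where
  "crd F p v = (THE \<xi>. dF F p \<xi> = v)"

definition tproj :: "(real^2 \<Rightarrow> real^'n) \<Rightarrow> real^2 \<Rightarrow> real^'n \<Rightarrow> real^'n" where
  "tproj F p v = (THE u. u \<in> Tsp F p \<and> (\<forall>w\<in>Tsp F p. (v - u) \<bullet> w = 0))"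

definition nproj :: "(real^2 \<Rightarrow> real^'n) \<Rightarrow> real^2 \<Rightarrow> real^'n \<Rightarrow> real^'n" where
  "nproj F p v = v - tproj F p v"

definition ddir :: "(real^2 \<Rightarrow> real^'n) \<Rightarrow> (real^2 \<Rightarrow> 'b::real_normed_vector) \<Rightarrow> real^2 \<Rightarrow> real^'n \<Rightarrow> 'b" where
  "ddir F f p v = (\<Sum>i\<in>UNIV. (crd F p v $ i) *\<^sub>R pd f i p)"

text \<open>Christoffel vectors: nabla^Sigma_{d_i} d_j = (D_{d_i} d_j F)^T.\<close>
definition chr :: "(real^2 \<Rightarrow> real^'n) \<Rightarrow> real^2 \<Rightarrow> 2 \<Rightarrow> 2 \<Rightarrow> real^'n" where
  "chr F p i j = tproj F p (pd (pd F j) i p)"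

text \<open>Levi-Civita covariant derivative of a one-form om (a function of the point and
  a tangent vector): (nabla_v om)(u), extended multilinearly from coordinate fields.\<close>
definition nab1 :: "(real^2 \<Rightarrow> real^'n) \<Rightarrow> (real^2 \<Rightarrow> real^'n \<Rightarrow> real)
     \<Rightarrow> real^2 \<Rightarrow> real^'n \<Rightarrow> real^'n \<Rightarrow> real" where
  "nab1 F om p v u = (\<Sum>i\<in>UNIV. \<Sum>j\<in>UNIV. (crd F p v $ i) * (crd F p u $ j) *
      (pd (\<lambda>q. om q (pd F j q)) i p - om p (chr F p i j)))"

definition nab2 :: "(real^2 \<Rightarrow> real^'n) \<Rightarrow> (real^2 \<Rightarrow> real^'n \<Rightarrow> real^'n \<Rightarrow> real)
     \<Rightarrow> real^2 \<Rightarrow> real^'n \<Rightarrow> real^'n \<Rightarrow> real^'n \<Rightarrow> real" where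
  "nab2 F T p v u w = (\<Sum>i\<in>UNIV. \<Sum>j\<in>UNIV. \<Sum>k\<in>UNIV.
      (crd F p v $ i) * (crd F p u $ j) * (crd F p w $ k) *
      (pd (\<lambda>q. T q (pd F j q) (pd F k q)) i p
        - T p (chr F p i j) (pd F k p) - T p (pd F j p) (chr F p i k)))"

definition onframe :: "(real^2 \<Rightarrow> real^'n) \<Rightarrow> real^2 \<Rightarrow> (2 \<Rightarrow> real^'n) \<Rightarrow> bool" where
  "onframe F p e = ((\<forall>i. e i \<in> Tsp F p) \<and> (\<forall>i j. e i \<bullet> e j = (if i = j then 1 else 0)))"

definition efr :: "(real^2 \<Rightarrow> real^'n) \<Rightarrow> real^2 \<Rightarrow> 2 \<Rightarrow> real^'n" where
  "efr F p = (SOME e. onframe F p e)"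

definition trT :: "(real^2 \<Rightarrow> real^'n) \<Rightarrow> real^2 \<Rightarrow> (real^'n \<Rightarrow> real^'n \<Rightarrow> real) \<Rightarrow> real" where
  "trT F p B = (\<Sum>i\<in>UNIV. B (efr F p i) (efr F p i))"

definition Lop :: "(real^2 \<Rightarrow> real^'n) \<Rightarrow> (real^2 \<Rightarrow> real^'n \<Rightarrow> real) \<Rightarrow> real^2 \<Rightarrow> real^'n \<Rightarrow> real" where
  "Lop F om p v = (\<Sum>i\<in>UNIV. nab2 F (nab1 F om) p (efr F p i) (efr F p i) v)
      - (1/2) * nab1 F om p (tproj F p (F p)) v"

definition GHF :: "(real^2) set \<Rightarrow> (real^2 \<Rightarrow> real^'n) \<Rightarrow> (real^2 \<Rightarrow> real^'n \<Rightarrow> real) \<Rightarrow> bool" where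
  "GHF U F om = (\<forall>p\<in>U.
      (\<forall>u\<in>Tsp F p. \<forall>v\<in>Tsp F p. nab1 F om p u v = nab1 F om p v u) \<and>
      trT F p (nab1 F om p) = (1/2) * om p (tproj F p (F p)))"

text \<open>Gauss curvature via the intrinsic Riemann tensor:
  K = <R(d1,d2)d2, d1> / (|d1|^2 |d2|^2 - <d1,d2>^2),
  R(X,Y)Z = nabla_X nabla_Y Z - nabla_Y nabla_X Z (coordinate fields commute).\<close>
definition gaussK :: "(real^2 \<Rightarrow> real^'n) \<Rightarrow> real^2 \<Rightarrow> real" where
  "gaussK F p =
     ((tproj F p (pd (\<lambda>q. tproj F q (pd (pd F 2) 2 q)) 1 p)
       - tproj F p (pd (\<lambda>q. tproj F q (pd (pd F 2) 1 q)) 2 p)) \<bullet> pd F 1 p)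
     / ((pd F 1 p \<bullet> pd F 1 p) * (pd F 2 p \<bullet> pd F 2 p) - (pd F 1 p \<bullet> pd F 2 p)^2)"

definition normal_frame :: "(real^2) set \<Rightarrow> (real^2 \<Rightarrow> real^'n) \<Rightarrow> (nat \<Rightarrow> real^2 \<Rightarrow> real^'n) \<Rightarrow> bool" where
  "normal_frame U F \<nu> = (\<forall>a < CARD('n) - 2. smooth_on2 U (\<nu> a) \<and>
      (\<forall>p\<in>U. (\<forall>w\<in>Tsp F p. \<nu> a p \<bullet> w = 0) \<and>
        (\<forall>b < CARD('n) - 2. \<nu> a p \<bullet> \<nu> b p = (if a = b then 1 else 0))))"

definition Aform :: "(real^2 \<Rightarrow> real^'n) \<Rightarrow> (real^2 \<Rightarrow> real^'n) \<Rightarrow> real^2 \<Rightarrow> real^'n \<Rightarrow> real^'n \<Rightarrow> real" where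
  "Aform F \<nu> p X Y = ddir F \<nu> p X \<bullet> Y"

definition Hvec :: "(real^2 \<Rightarrow> real^'n) \<Rightarrow> (nat \<Rightarrow> real^2 \<Rightarrow> real^'n) \<Rightarrow> real^2 \<Rightarrow> real^'n" where
  "Hvec F \<nu> p = (\<Sum>a<CARD('n) - 2. trT F p (Aform F (\<nu> a) p) *\<^sub>R \<nu> a p)"

definition self_shrinker :: "(real^2) set \<Rightarrow> (real^2 \<Rightarrow> real^'n) \<Rightarrow> (nat \<Rightarrow> real^2 \<Rightarrow> real^'n) \<Rightarrow> bool" where
  "self_shrinker U F \<nu> = (\<forall>p\<in>U. Hvec F \<nu> p = (1/2) *\<^sub>R nproj F p (F p))"

end

theory Submission
  imports Defs
begin

(* Everything is computed in the coordinates of the parametrization F.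
   Write S_ij = <d_i W, d_j F> for the matrix of nabla omega (W is tangent, so the
   Christoffel terms drop out).  The GHF hypotheses say that S is symmetric and that
   g^ij S_ij = <W,x>/2.  Differentiating both identities, and using the symmetry of
   second partial derivatives (Clairaut), supplies exactly the third-order information
   needed to evaluate the drift Laplacian; all tangential terms cancel and
     L omega(d_k) = omega(d_k)/2 + <d_k W, x^N>/2 + (curvature term),
   where the curvature term is built from the normal parts of d_i d_j F.
   Expanding normal parts in the frame nu_alpha, the Weingarten equation turns
   <d_k W, x^N> into -sum_alpha <x,nu_alpha> A^alpha(W, d_k), and the Gauss equation turns
   the curvature term into K omega(d_k): this is the first formula.  For a self-shrinker
   <x,nu_alpha> = 2 tr A^alpha, and the 2x2 Cayley-Hamilton identity
   tr(A) A - det(A) g = A g^-1 A gives the second formula. *)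

section \<open>Partial derivatives on the parameter domain\<close>

lemma pd_has_derivative:
  assumes "(f has_derivative f') (at p)"
  shows "pd f i p = f' (axis i 1)"
proof -
  have line: "((\<lambda>t::real. p + t *\<^sub>R axis i (1::real)) has_derivative (\<lambda>t. t *\<^sub>R axis i 1)) (at 0)"
    by (auto intro!: derivative_eq_intros)
  have "((\<lambda>t. f (p + t *\<^sub>R axis i 1)) has_derivative (\<lambda>t. f' (t *\<^sub>R axis i 1))) (at 0)"
    using diff_chain_at[OF line] assms by (simp add: o_def)
  moreover have "(\<lambda>t. f' (t *\<^sub>R axis i 1)) = (\<lambda>t. t *\<^sub>R f' (axis i 1))"
    using assms has_derivative_bounded_linear linear_scale linear_simps(5) by blast
  ultimately have "((\<lambda>t. f (p + t *\<^sub>R axis i 1)) has_vector_derivative f' (axis i 1)) (at 0)"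
    by (simp add: has_vector_derivative_def)
  then show ?thesis unfolding pd_def by (rule vector_derivative_at)
qed

lemma pd_local:
  assumes "open U" "p \<in> U" "\<And>q. q \<in> U \<Longrightarrow> f q = g q"
  shows "pd f i p = pd g i p"
proof -
  obtain r where r: "r > 0" "ball p r \<subseteq> U" using assms(1,2) open_contains_ball by blast
  have "eventually (\<lambda>t::real. t \<in> UNIV \<longrightarrow> f (p + t *\<^sub>R axis i 1) = g (p + t *\<^sub>R axis i 1)) (nhds 0)"
    unfolding eventually_nhds_metric
  proof (intro exI[of _ r] conjI allI impI)
    fix t :: real assume "dist t 0 < r"
    then have "p + t *\<^sub>R axis i 1 \<in> ball p r" by (simp add: dist_norm)
    then show "f (p + t *\<^sub>R axis i 1) = g (p + t *\<^sub>R axis i 1)" using r assms(3) by blast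
  qed (use r in auto)
  then show ?thesis unfolding pd_def by (intro vector_derivative_cong_eq) auto
qed

lemma pd_zero_on:
  assumes "open U" "p \<in> U" "\<And>q. q \<in> U \<Longrightarrow> f q = 0"
  shows "pd f i p = 0"
proof -
  have "((\<lambda>q::real^2. 0) has_derivative (\<lambda>h. 0)) (at p)" by simp
  then show ?thesis using pd_local[OF assms] pd_has_derivative by fastforce
qed

lemma has_vector_derivative_along_line:
  assumes "(f has_derivative f') (at (q + t0 *\<^sub>R a))"
  shows "((\<lambda>t. f (q + t *\<^sub>R a)) has_vector_derivative f' a) (at t0 within S)"
proof -
  have line: "((\<lambda>t::real. q + t *\<^sub>R a) has_derivative (\<lambda>t. t *\<^sub>R a)) (at t0 within S)"
    by (auto intro!: derivative_eq_intros)
  have "((\<lambda>t. f (q + t *\<^sub>R a)) has_derivative (\<lambda>t. f' (t *\<^sub>R a))) (at t0 within S)"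
    using diff_chain_within[OF line has_derivative_at_withinI[OF assms]] by (simp add: o_def)
  moreover have "(\<lambda>t. f' (t *\<^sub>R a)) = (\<lambda>t. t *\<^sub>R f' a)"
    using assms has_derivative_bounded_linear linear_scale linear_simps(5) by blast
  ultimately show ?thesis by (simp add: has_vector_derivative_def)
qed

definition mixed_difference :: "(real^2 \<Rightarrow> 'b::real_normed_vector) \<Rightarrow> real^2 \<Rightarrow> 2 \<Rightarrow> 2 \<Rightarrow> real \<Rightarrow> 'b" where
  "mixed_difference f p i j h =
     f (p + h *\<^sub>R axis i 1 + h *\<^sub>R axis j 1) - f (p + h *\<^sub>R axis i 1) - f (p + h *\<^sub>R axis j 1) + f p"

lemma mixed_difference_sym: "mixed_difference f p i j h = mixed_difference f p j i h"
  unfolding mixed_difference_def by (simp add: algebra_simps)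

lemma line_difference_has_vector_derivative:
  assumes "f differentiable (at (q + c + t *\<^sub>R axis i 1))" "f differentiable (at (q + t *\<^sub>R axis i 1))"
  shows "((\<lambda>t. f (q + c + t *\<^sub>R axis i 1) - f (q + t *\<^sub>R axis i 1)) has_vector_derivative
      pd f i (q + c + t *\<^sub>R axis i 1) - pd f i (q + t *\<^sub>R axis i 1)) (at t within S)"
proof -
  obtain f1 f2 where f1: "(f has_derivative f1) (at (q + c + t *\<^sub>R axis i 1))"
    and f2: "(f has_derivative f2) (at (q + t *\<^sub>R axis i 1))"
    using assms by (meson differentiable_def)
  show ?thesis
    using has_vector_derivative_diff[OF has_vector_derivative_along_line[OF f1] has_vector_derivative_along_line[OF f2]]
    unfolding pd_has_derivative[OF f1] pd_has_derivative[OF f2] .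
qed

lemma remainder_second_difference:
  fixes r :: "'a::real_normed_vector \<Rightarrow> 'b::real_normed_vector"
  assumes rb: "\<And>y. norm y < d \<Longrightarrow> norm (r y) \<le> e * norm y" and e: "e \<ge> 0"
    and ab: "norm a = 1" "norm b = 1" and t: "\<bar>t\<bar> \<le> h" and h: "2 * h < d"
  shows "norm (r (t *\<^sub>R a + h *\<^sub>R b) - r (t *\<^sub>R a) - r (h *\<^sub>R b)) \<le> 4 * e * h"
proof -
  have bound: "norm (r y) \<le> e * c" if "norm y \<le> c" "c < d" for y c
    using rb[of y] mult_left_mono[OF that(1) e] that by linarith
  have "norm (t *\<^sub>R a + h *\<^sub>R b) \<le> 2 * h"
    using norm_triangle_ineq[of "t *\<^sub>R a" "h *\<^sub>R b"] ab t by simp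
  then have "norm (r (t *\<^sub>R a + h *\<^sub>R b)) \<le> e * (2 * h)" using bound h by blast
  moreover have "norm (r (t *\<^sub>R a)) \<le> e * h" using bound[of "t *\<^sub>R a" h] ab t h by simp
  moreover have "norm (r (h *\<^sub>R b)) \<le> e * h" using bound[of "h *\<^sub>R b" h] ab t h by simp
  ultimately show ?thesis
    using norm_triangle_ineq4[of "r (t *\<^sub>R a + h *\<^sub>R b) - r (t *\<^sub>R a)" "r (h *\<^sub>R b)"]
      norm_triangle_ineq4[of "r (t *\<^sub>R a + h *\<^sub>R b)" "r (t *\<^sub>R a)"] by linarith
qed

text \<open>Apply the mean value inequality to
  \<open>\<phi>(t) = f(p + h b + t a) - f(p + t a)\<close>, whose derivative \<open>\<phi>'\<close> varies by \<open>o(h)\<close>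
  because \<open>\<partial>\<^sub>i f\<close> is linearized by \<open>L\<close> at \<open>p\<close>.\<close>
lemma mixed_difference_estimate:
  fixes f :: "real^2 \<Rightarrow> 'b::real_normed_vector"
  assumes U: "open U" "p \<in> U" and fd: "\<And>q. q \<in> U \<Longrightarrow> f differentiable (at q)"
    and gd: "pd f i differentiable (at p)" and e: "e > 0"
  shows "\<exists>d>0. \<forall>h. 0 < h \<and> h < d \<longrightarrow>
     norm (mixed_difference f p i j h - (h * h) *\<^sub>R pd (pd f i) j p) \<le> 5 * e * (h * h)"
proof -
  define a :: "real^2" where "a = axis i 1"
  define b :: "real^2" where "b = axis j 1"
  obtain L where L: "(pd f i has_derivative L) (at p)" using gd differentiable_def by blast
  have linL: "linear L" using L has_derivative_linear by blast
  obtain d1 where d1: "d1 > 0"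
    "\<And>y. norm (y - p) < d1 \<Longrightarrow> norm (pd f i y - pd f i p - L (y - p)) \<le> e * norm (y - p)"
    using L e unfolding has_derivative_at_alt by blast
  obtain d0 where d0: "d0 > 0" "ball p d0 \<subseteq> U" using U open_contains_ball by blast
  define r where "r y = pd f i (p + y) - pd f i p - L y" for y
  have rb: "norm (r y) \<le> e * norm y" if "norm y < d1" for y
    using d1(2)[of "p + y"] that by (simp add: r_def)
  have ab: "norm a = 1" "norm b = 1" by (simp_all add: a_def b_def)
  show ?thesis
  proof (intro exI[of _ "min d0 d1 / 2"] conjI allI impI)
    show "min d0 d1 / 2 > 0" using d0 d1 by simp
    fix h :: real assume h: "0 < h \<and> h < min d0 d1 / 2"
    define phi where "phi t = f (p + h *\<^sub>R b + t *\<^sub>R a) - f (p + t *\<^sub>R a)" for t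
    define phi' where "phi' t = pd f i (p + h *\<^sub>R b + t *\<^sub>R a) - pd f i (p + t *\<^sub>R a)" for t
    have inU: "p + s *\<^sub>R b + t *\<^sub>R a \<in> U" if "\<bar>t\<bar> \<le> h" "s \<in> {0, h}" for t s
    proof -
      have "norm (s *\<^sub>R b + t *\<^sub>R a) < d0"
        using norm_triangle_ineq[of "s *\<^sub>R b" "t *\<^sub>R a"] ab that h by auto
      then have "p + (s *\<^sub>R b + t *\<^sub>R a) \<in> ball p d0" by (simp add: dist_norm norm_minus_commute add.commute)
      then show ?thesis using d0 by (auto simp: add.assoc)
    qed
    have der: "(phi has_vector_derivative phi' t) (at t within {0..h})" if "t \<in> {0..h}" for t
      unfolding phi_def phi'_def a_def
      by (rule line_difference_has_vector_derivative)
        (use fd inU[of t h] inU[of t 0] that in \<open>auto simp: a_def\<close>)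
    have variation: "norm (phi' t - phi' 0) \<le> 4 * e * h" if "t \<in> {0..h}" for t
    proof -
      have "phi' t - phi' 0 = r (t *\<^sub>R a + h *\<^sub>R b) - r (t *\<^sub>R a) - r (h *\<^sub>R b)"
        unfolding phi'_def r_def using linL by (simp add: linear_add algebra_simps)
      moreover have "norm (r (t *\<^sub>R a + h *\<^sub>R b) - r (t *\<^sub>R a) - r (h *\<^sub>R b)) \<le> 4 * e * h"
        by (rule remainder_second_difference[OF rb _ ab]) (use e that h in auto)
      ultimately show ?thesis by simp
    qed
    have "norm (phi h - phi 0 - (h - 0) *\<^sub>R phi' 0) \<le> norm (h - 0) * (4 * e * h)"
      by (rule vector_differentiable_bound_linearization[OF der _ variation])
        (use h in \<open>auto simp: closed_segment_eq_real_ivl\<close>)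
    then have mvt: "norm (phi h - phi 0 - h *\<^sub>R phi' 0) \<le> 4 * e * (h * h)"
      using h by (simp add: algebra_simps)
    have "pd (pd f i) j p = L b" using pd_has_derivative[OF L] b_def by simp
    moreover have "phi' 0 = h *\<^sub>R L b + r (h *\<^sub>R b)"
      unfolding phi'_def r_def using linL by (simp add: linear_scale)
    ultimately have split: "mixed_difference f p i j h - (h * h) *\<^sub>R pd (pd f i) j p
        = (phi h - phi 0 - h *\<^sub>R phi' 0) + h *\<^sub>R r (h *\<^sub>R b)"
      unfolding mixed_difference_def phi_def a_def[symmetric] b_def[symmetric]
      by (simp add: algebra_simps)
    have "norm (r (h *\<^sub>R b)) \<le> e * h" using rb[of "h *\<^sub>R b"] ab h by auto
    then have "norm (h *\<^sub>R r (h *\<^sub>R b)) \<le> e * (h * h)"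
      using mult_left_mono[of _ _ h] h by (simp add: algebra_simps)
    then show "norm (mixed_difference f p i j h - (h * h) *\<^sub>R pd (pd f i) j p) \<le> 5 * e * (h * h)"
      unfolding split using mvt norm_triangle_ineq[of "phi h - phi 0 - h *\<^sub>R phi' 0" "h *\<^sub>R r (h *\<^sub>R b)"]
      by linarith
  qed
qed

text \<open>Clairaut (Schwarz): mixed partial derivatives commute when the first partials are
  differentiable.  Both orders approximate the same symmetric mixed difference.\<close>
lemma clairaut:
  fixes f :: "real^2 \<Rightarrow> 'b::real_normed_vector"
  assumes U: "open U" "p \<in> U" and fd: "\<And>q. q \<in> U \<Longrightarrow> f differentiable (at q)"
    and gd: "\<And>i. pd f i differentiable (at p)"
  shows "pd (pd f i) j p = pd (pd f j) i p"
proof -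
  let ?D = "pd (pd f i) j p - pd (pd f j) i p"
  have bound: "norm ?D \<le> 10 * e" if e: "e > 0" for e
  proof -
    obtain d1 where d1: "d1 > 0" "\<forall>h. 0 < h \<and> h < d1 \<longrightarrow>
        norm (mixed_difference f p i j h - (h * h) *\<^sub>R pd (pd f i) j p) \<le> 5 * e * (h * h)"
      using mixed_difference_estimate[OF U fd gd e] by blast
    obtain d2 where d2: "d2 > 0" "\<forall>h. 0 < h \<and> h < d2 \<longrightarrow>
        norm (mixed_difference f p i j h - (h * h) *\<^sub>R pd (pd f j) i p) \<le> 5 * e * (h * h)"
      using mixed_difference_estimate[OF U fd gd e, of j i] unfolding mixed_difference_sym[of f p j i] by blast
    define h where "h = min d1 d2 / 2"
    have h: "0 < h" "h < d1" "h < d2" using d1 d2 by (auto simp: h_def)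
    define X where "X = mixed_difference f p i j h"
    have "(h * h) *\<^sub>R ?D = (X - (h * h) *\<^sub>R pd (pd f j) i p) - (X - (h * h) *\<^sub>R pd (pd f i) j p)"
      by (simp add: algebra_simps)
    then have "norm ((h * h) *\<^sub>R ?D) \<le> 10 * e * (h * h)"
      using d1 d2 h norm_triangle_ineq4[of "X - (h * h) *\<^sub>R pd (pd f j) i p" "X - (h * h) *\<^sub>R pd (pd f i) j p"]
      unfolding X_def by fastforce
    moreover have "norm ((h * h) *\<^sub>R ?D) = (h * h) * norm ?D" using h by (simp only: norm_scaleR) simp
    ultimately have "(h * h) * norm ?D \<le> (h * h) * (10 * e)" by (simp add: algebra_simps)
    then show ?thesis using h by (simp add: mult_le_cancel_left_pos)
  qed
  show ?thesis
  proof (rule ccontr)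
    assume "\<not> ?thesis"
    then have "norm ?D > 0" by simp
    then show False using bound[of "norm ?D / 20"] by simp
  qed
qed

lemma smooth_pd: "smooth_on2 U f \<Longrightarrow> smooth_on2 U (pd f i)"
  unfolding smooth_on2_def by (metis Ck.simps(2))

lemma smooth_differentiable: "smooth_on2 U f \<Longrightarrow> open U \<Longrightarrow> q \<in> U \<Longrightarrow> f differentiable (at q)"
  unfolding smooth_on2_def by (metis Ck.simps(2) differentiable_on_eq_differentiable_at)

lemma smooth_pd_differentiable:
  "smooth_on2 U f \<Longrightarrow> open U \<Longrightarrow> q \<in> U \<Longrightarrow> pd f i differentiable (at q)"
  using smooth_differentiable smooth_pd by blast

lemma smooth_clairaut:
  assumes "smooth_on2 U f" "open U" "p \<in> U"
  shows "pd (pd f i) j p = pd (pd f j) i p"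
  by (rule clairaut[OF assms(2,3)]) (use assms smooth_differentiable smooth_pd_differentiable in blast)+

lemma pd_inner:
  assumes "f differentiable (at p)" "g differentiable (at p)"
  shows "pd (\<lambda>q. f q \<bullet> g q) i p = pd f i p \<bullet> g p + f p \<bullet> pd g i p"
proof -
  obtain f' g' where f': "(f has_derivative f') (at p)" and g': "(g has_derivative g') (at p)"
    using assms by (meson differentiable_def)
  from pd_has_derivative[OF has_derivative_inner[OF f' g']] pd_has_derivative[OF f'] pd_has_derivative[OF g']
  show ?thesis by simp
qed

lemma pd_mult:
  fixes f g :: "real^2 \<Rightarrow> real"
  assumes "f differentiable (at p)" "g differentiable (at p)"
  shows "pd (\<lambda>q. f q * g q) i p = pd f i p * g p + f p * pd g i p"
proof -
  obtain f' g' where f': "(f has_derivative f') (at p)" and g': "(g has_derivative g') (at p)"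
    using assms by (meson differentiable_def)
  from pd_has_derivative[OF has_derivative_mult[OF f' g']] pd_has_derivative[OF f'] pd_has_derivative[OF g']
  show ?thesis by simp
qed

lemma pd_scaleR:
  fixes f :: "real^2 \<Rightarrow> real"
  assumes "f differentiable (at p)" "g differentiable (at p)"
  shows "pd (\<lambda>q. f q *\<^sub>R g q) i p = pd f i p *\<^sub>R g p + f p *\<^sub>R pd g i p"
proof -
  obtain f' g' where f': "(f has_derivative f') (at p)" and g': "(g has_derivative g') (at p)"
    using assms by (meson differentiable_def)
  from pd_has_derivative[OF has_derivative_scaleR[OF f' g']] pd_has_derivative[OF f'] pd_has_derivative[OF g']
  show ?thesis by simp
qed

lemma pd_add:
  assumes "f differentiable (at p)" "g differentiable (at p)"
  shows "pd (\<lambda>q. f q + g q) i p = pd f i p + pd g i p"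
proof -
  obtain f' g' where f': "(f has_derivative f') (at p)" and g': "(g has_derivative g') (at p)"
    using assms by (meson differentiable_def)
  from pd_has_derivative[OF has_derivative_add[OF f' g']] pd_has_derivative[OF f'] pd_has_derivative[OF g']
  show ?thesis by simp
qed

lemma pd_diff:
  assumes "f differentiable (at p)" "g differentiable (at p)"
  shows "pd (\<lambda>q. f q - g q) i p = pd f i p - pd g i p"
proof -
  obtain f' g' where f': "(f has_derivative f') (at p)" and g': "(g has_derivative g') (at p)"
    using assms by (meson differentiable_def)
  from pd_has_derivative[OF has_derivative_diff[OF f' g']] pd_has_derivative[OF f'] pd_has_derivative[OF g']
  show ?thesis by simp
qed

lemma pd_const: "pd (\<lambda>q. c) i p = 0"
  using pd_has_derivative[of "\<lambda>q. c" "\<lambda>h. 0"] by simp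

lemma pd_sum:
  assumes "finite A" "\<And>a. a \<in> A \<Longrightarrow> f a differentiable (at p)"
  shows "pd (\<lambda>q. \<Sum>a\<in>A. f a q) i p = (\<Sum>a\<in>A. pd (f a) i p)"
  using assms
proof (induction A rule: finite_induct)
  case empty then show ?case by (simp add: pd_const)
next
  case (insert x A)
  have "(\<lambda>q. \<Sum>a\<in>A. f a q) differentiable (at p)"
    using insert by (intro differentiable_sum) auto
  then show ?case using insert pd_add[of "f x" p "\<lambda>q. \<Sum>a\<in>A. f a q"] by simp
qed

lemma pd_divide:
  fixes f :: "real^2 \<Rightarrow> real"
  assumes "f differentiable (at p)"
  shows "pd (\<lambda>q. f q / c) i p = pd f i p / c"
  using pd_mult[OF assms differentiable_const[of "1 / c"], of i] by (simp add: pd_const divide_inverse)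

section \<open>Linear algebra of the tangent plane\<close>

definition regular_at :: "(real^2 \<Rightarrow> real^'n) \<Rightarrow> real^2 \<Rightarrow> bool" where
  "regular_at F q = (independent {pd F 1 q, pd F 2 q} \<and> pd F 1 q \<noteq> pd F 2 q)"

text \<open>The metric (first fundamental form) \<open>g\<^sub>i\<^sub>j\<close>, its determinant, its inverse \<open>g\<^sup>i\<^sup>j\<close> (Cramer's rule) and the dual
  frame \<open>d\<^sup>i = g\<^sup>i\<^sup>j d\<^sub>j F\<close> characterised by \<open><d\<^sup>i, d\<^sub>j F> = \<delta>\<^sup>i\<^sub>j\<close>.\<close>
definition first_ff :: "(real^2 \<Rightarrow> real^'n) \<Rightarrow> real^2 \<Rightarrow> 2 \<Rightarrow> 2 \<Rightarrow> real" where
  "first_ff F q i j = pd F i q \<bullet> pd F j q"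

definition metric_det :: "(real^2 \<Rightarrow> real^'n) \<Rightarrow> real^2 \<Rightarrow> real" where
  "metric_det F q = first_ff F q 1 1 * first_ff F q 2 2 - (first_ff F q 1 2)\<^sup>2"

definition inv_metric :: "(real^2 \<Rightarrow> real^'n) \<Rightarrow> real^2 \<Rightarrow> 2 \<Rightarrow> 2 \<Rightarrow> real" where
  "inv_metric F q i j =
     (if i = j then (if i = 1 then first_ff F q 2 2 else first_ff F q 1 1) else - first_ff F q 1 2) / metric_det F q"

definition dual_frame :: "(real^2 \<Rightarrow> real^'n) \<Rightarrow> real^2 \<Rightarrow> 2 \<Rightarrow> real^'n" where
  "dual_frame F q i = (\<Sum>j\<in>UNIV. inv_metric F q i j *\<^sub>R pd F j q)"

lemma first_ff_sym: "first_ff F q i j = first_ff F q j i"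
  by (simp add: first_ff_def inner_commute)

lemma inv_metric_sym: "inv_metric F q i j = inv_metric F q j i"
  by (auto simp: inv_metric_def)

text \<open>At a regular point the Gram determinant is positive: it equals \<open>|d\<^sub>2F|\<^sup>2 |u|\<^sup>2\<close>, where
  \<open>u\<close> is the (nonzero) component of \<open>d\<^sub>1F\<close> orthogonal to \<open>d\<^sub>2F\<close>.\<close>
lemma metric_det_pos:
  assumes "regular_at F q" shows "metric_det F q > 0"
proof -
  let ?a = "pd F 1 q" and ?b = "pd F 2 q"
  have ind: "independent {?b}" and nsp: "?a \<notin> span {?b}"
    using assms unfolding regular_at_def by (auto simp: independent_insert)
  then have bb: "?b \<bullet> ?b > 0" by simp
  define u where "u = ?a - ((?a \<bullet> ?b) / (?b \<bullet> ?b)) *\<^sub>R ?b"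
  have "u \<noteq> 0"
  proof
    assume "u = 0"
    then have "?a = ((?a \<bullet> ?b) / (?b \<bullet> ?b)) *\<^sub>R ?b" by (simp add: u_def)
    then have "?a \<in> span {?b}" by (metis span_base span_scale singletonI)
    then show False using nsp by simp
  qed
  then have uu: "u \<bullet> u > 0" by simp
  have "u \<bullet> u = (?a \<bullet> ?a) - (?a \<bullet> ?b)^2 / (?b \<bullet> ?b)"
    unfolding u_def using bb
    by (simp add: inner_diff_left inner_diff_right inner_commute power2_eq_square field_simps)
  then have "metric_det F q = (?b \<bullet> ?b) * (u \<bullet> u)"
    using bb unfolding metric_det_def first_ff_def by (simp add: field_simps power2_eq_square)
  then show ?thesis using bb uu by simp
qed

lemma dual_frame_pairing:
  assumes "regular_at F q" shows "dual_frame F q i \<bullet> pd F j q = (if i = j then 1 else 0)"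
proof -
  define a b c where "a = pd F 1 q \<bullet> pd F 1 q" and "b = pd F 1 q \<bullet> pd F 2 q"
    and "c = pd F 2 q \<bullet> pd F 2 q"
  define D where "D = a * c - b * b"
  have b': "pd F 2 q \<bullet> pd F 1 q = b" by (simp add: b_def inner_commute)
  have "D \<noteq> 0"
    using metric_det_pos[OF assms] by (simp add: metric_det_def first_ff_def power2_eq_square a_def b_def c_def D_def)
  then show ?thesis
    unfolding dual_frame_def inv_metric_def metric_det_def first_ff_def
    using exhaust_2[of i] exhaust_2[of j]
    by (auto simp: inner_sum_left inner_diff_left sum_2 power2_eq_square a_def[symmetric] b_def[symmetric]
        c_def[symmetric] b' D_def[symmetric]; simp add: field_simps; simp add: D_def algebra_simps)
qed

lemma dual_frame_pairing':
  assumes "regular_at F q" shows "pd F j q \<bullet> dual_frame F q i = (if i = j then 1 else 0)"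
  using dual_frame_pairing[OF assms] by (simp add: inner_commute)

lemma dual_frame_inner:
  assumes "regular_at F q" shows "dual_frame F q i \<bullet> dual_frame F q j = inv_metric F q i j"
proof -
  have "dual_frame F q i \<bullet> dual_frame F q j = (\<Sum>k\<in>UNIV. inv_metric F q j k * (dual_frame F q i \<bullet> pd F k q))"
    unfolding dual_frame_def[of F q j] by (simp add: inner_sum_right)
  also have "\<dots> = inv_metric F q j i" using exhaust_2[of i] by (auto simp: sum_2 dual_frame_pairing[OF assms])
  finally show ?thesis using inv_metric_sym by metis
qed

lemma Tsp_iff: "u \<in> Tsp F q \<longleftrightarrow> (\<exists>c d. u = c *\<^sub>R pd F 1 q + d *\<^sub>R pd F 2 q)"
  unfolding Tsp_def span_insert span_singleton by (auto simp: algebra_simps)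

lemma Tsp_subspace: "subspace (Tsp F q)"
  unfolding Tsp_def by simp

lemma pd_in_Tsp: "pd F i q \<in> Tsp F q"
  unfolding Tsp_def using exhaust_2[of i] by (auto intro: span_base)

lemma dual_frame_in_Tsp: "dual_frame F q i \<in> Tsp F q"
  unfolding dual_frame_def by (intro subspace_sum[OF Tsp_subspace] subspace_scale[OF Tsp_subspace] pd_in_Tsp)

lemma tangent_eqI:
  assumes "u \<in> Tsp F q" "w \<in> Tsp F q" "\<And>j. u \<bullet> pd F j q = w \<bullet> pd F j q" shows "u = w"
proof -
  obtain c d where cd: "u - w = c *\<^sub>R pd F 1 q + d *\<^sub>R pd F 2 q"
    using subspace_diff[OF Tsp_subspace assms(1,2)] Tsp_iff by blast
  have perp: "(u - w) \<bullet> pd F j q = 0" for j using assms(3) by (simp add: inner_diff_left)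
  have "(u - w) \<bullet> (u - w) = c * ((u - w) \<bullet> pd F 1 q) + d * ((u - w) \<bullet> pd F 2 q)"
    by (subst (2) cd) (simp add: inner_add_right)
  then show ?thesis using perp by simp
qed

lemma tangent_expand:
  assumes "regular_at F q" "u \<in> Tsp F q"
  shows "u = (\<Sum>i\<in>UNIV. (u \<bullet> dual_frame F q i) *\<^sub>R pd F i q)"
proof -
  obtain c d where u: "u = c *\<^sub>R pd F 1 q + d *\<^sub>R pd F 2 q" using assms Tsp_iff by blast
  have "u \<bullet> dual_frame F q 1 = c" "u \<bullet> dual_frame F q 2 = d"
    using dual_frame_pairing'[OF assms(1)] unfolding u by (auto simp: inner_add_left)
  then show ?thesis by (simp add: sum_2 u)
qed

lemma crd_tangent:
  assumes "regular_at F q" "u \<in> Tsp F q"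
  shows "crd F q u $ i = u \<bullet> dual_frame F q i"
proof -
  have "crd F q u = (\<chi> i. u \<bullet> dual_frame F q i)"
    unfolding crd_def
  proof (rule the_equality)
    show "dF F q (\<chi> i. u \<bullet> dual_frame F q i) = u"
      using tangent_expand[OF assms] by (simp add: dF_def)
    fix \<xi> assume "dF F q \<xi> = u"
    then have "u \<bullet> dual_frame F q i = \<xi> $ i" for i
      unfolding dF_def using exhaust_2[of i] by (auto simp: inner_sum_left inner_add_left sum_2 dual_frame_pairing'[OF assms(1)])
    then show "\<xi> = (\<chi> i. u \<bullet> dual_frame F q i)" by (simp add: vec_eq_iff)
  qed
  then show ?thesis by simp
qed

lemma crd_pd:
  assumes "regular_at F q" shows "crd F q (pd F j q) $ i = (if i = j then 1 else 0)"
  using crd_tangent[OF assms pd_in_Tsp] dual_frame_pairing'[OF assms] by simp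

lemma tproj_eq:
  assumes "regular_at F q"
  shows "tproj F q y = (\<Sum>i\<in>UNIV. (y \<bullet> pd F i q) *\<^sub>R dual_frame F q i)"
proof -
  let ?u = "(\<Sum>i\<in>UNIV. (y \<bullet> pd F i q) *\<^sub>R dual_frame F q i)"
  have uT: "?u \<in> Tsp F q"
    by (intro subspace_sum[OF Tsp_subspace] subspace_scale[OF Tsp_subspace] dual_frame_in_Tsp)
  have udot: "?u \<bullet> pd F j q = y \<bullet> pd F j q" for j
    using exhaust_2[of j] by (auto simp: inner_sum_left inner_add_left sum_2 dual_frame_pairing[OF assms])
  have perp: "(y - ?u) \<bullet> w = 0" if wT: "w \<in> Tsp F q" for w
  proof -
    obtain c d where w: "w = c *\<^sub>R pd F 1 q + d *\<^sub>R pd F 2 q" using wT Tsp_iff by blast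
    show ?thesis unfolding w using udot by (simp add: inner_add_right inner_diff_left)
  qed
  show ?thesis unfolding tproj_def
  proof (rule the_equality)
    show "?u \<in> Tsp F q \<and> (\<forall>w\<in>Tsp F q. (y - ?u) \<bullet> w = 0)" using uT perp by blast
    fix u' assume u': "u' \<in> Tsp F q \<and> (\<forall>w\<in>Tsp F q. (y - u') \<bullet> w = 0)"
    show "u' = ?u"
    proof (rule tangent_eqI)
      show "u' \<in> Tsp F q" "?u \<in> Tsp F q" using u' uT by auto
      fix j
      have "(y - u') \<bullet> pd F j q = 0" using u' pd_in_Tsp by blast
      then show "u' \<bullet> pd F j q = ?u \<bullet> pd F j q" using udot by (simp add: inner_diff_left)
    qed
  qed
qed

lemma tproj_in_Tsp: "regular_at F q \<Longrightarrow> tproj F q y \<in> Tsp F q"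
  unfolding tproj_eq by (intro subspace_sum[OF Tsp_subspace] subspace_scale[OF Tsp_subspace] dual_frame_in_Tsp)

lemma tproj_inner:
  assumes "regular_at F q" "w \<in> Tsp F q" shows "tproj F q y \<bullet> w = y \<bullet> w"
proof -
  obtain c d where w: "w = c *\<^sub>R pd F 1 q + d *\<^sub>R pd F 2 q" using assms Tsp_iff by blast
  have "tproj F q y \<bullet> pd F j q = y \<bullet> pd F j q" for j
    using exhaust_2[of j] by (auto simp: tproj_eq[OF assms(1)] inner_sum_left inner_add_left sum_2 dual_frame_pairing[OF assms(1)])
  then show ?thesis unfolding w by (simp add: inner_add_right)
qed

lemma tproj_inner':
  assumes "regular_at F q" "w \<in> Tsp F q" shows "w \<bullet> tproj F q y = w \<bullet> y"
  using tproj_inner[OF assms] by (simp add: inner_commute)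

lemma onframe_Tsp: "onframe F q e \<Longrightarrow> e a \<in> Tsp F q"
  unfolding onframe_def by auto

text \<open>Gram-Schmidt applied to \<open>d\<^sub>2F, d\<^sub>1F\<close> gives an orthonormal frame at every regular point,
  so the chosen frame \<open>efr\<close> of the definitions is orthonormal.\<close>
lemma onframe_exists:
  assumes "regular_at F q" shows "\<exists>e. onframe F q e"
proof -
  let ?a = "pd F 2 q" and ?b = "pd F 1 q"
  have ind: "independent {?a}" and nsp: "?b \<notin> span {?a}"
    using assms unfolding regular_at_def by (auto simp: independent_insert)
  define e1 where "e1 = (1 / norm ?a) *\<^sub>R ?a"
  have e1: "e1 \<bullet> e1 = 1" using ind by (simp add: e1_def dot_square_norm power2_eq_square)
  define u where "u = ?b - (?b \<bullet> e1) *\<^sub>R e1"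
  have "u \<noteq> 0"
  proof
    assume "u = 0"
    then have "?b = ((?b \<bullet> e1) / norm ?a) *\<^sub>R ?a" by (simp add: u_def e1_def)
    then have "?b \<in> span {?a}" by (metis span_base span_scale singletonI)
    then show False using nsp by simp
  qed
  define e2 where "e2 = (1 / norm u) *\<^sub>R u"
  have e2: "e2 \<bullet> e2 = 1" using \<open>u \<noteq> 0\<close> by (simp add: e2_def dot_square_norm power2_eq_square)
  have "u \<bullet> e1 = 0" unfolding u_def using e1 by (simp add: inner_diff_left)
  then have e12: "e1 \<bullet> e2 = 0" "e2 \<bullet> e1 = 0" by (simp_all add: e2_def inner_commute)
  have T1: "e1 \<in> Tsp F q" unfolding e1_def by (intro subspace_scale[OF Tsp_subspace] pd_in_Tsp)
  have T2: "e2 \<in> Tsp F q" unfolding e2_def u_def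
    by (intro subspace_scale[OF Tsp_subspace] subspace_diff[OF Tsp_subspace] pd_in_Tsp T1)
  define e where "e i = (if i = 1 then e1 else e2)" for i :: 2
  have "onframe F q e" unfolding onframe_def e_def
    using T1 T2 e1 e2 e12 exhaust_2 by auto
  then show ?thesis by blast
qed

lemma efr_onframe: "regular_at F q \<Longrightarrow> onframe F q (efr F q)"
  unfolding efr_def using onframe_exists by (metis someI_ex)

lemma onframe_expand:
  assumes "regular_at F q" "onframe F q e" "u \<in> Tsp F q"
  shows "u = (\<Sum>a\<in>UNIV. (u \<bullet> e a) *\<^sub>R e a)"
proof -
  have o: "e 1 \<bullet> e 1 = 1" "e 2 \<bullet> e 2 = 1" "e 1 \<bullet> e 2 = 0" "e 2 \<bullet> e 1 = 0"
    using assms(2) unfolding onframe_def by auto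
  have ind: "independent {e 1, e 2}"
    by (rule pairwise_orthogonal_independent) (use o in \<open>auto simp: pairwise_def orthogonal_def\<close>)
  have "dim (Tsp F q) = 2"
    using assms(1) unfolding regular_at_def Tsp_def using dim_span_eq_card_independent by fastforce
  moreover have "e 1 \<noteq> e 2" using o by auto
  ultimately have "Tsp F q \<subseteq> span {e 1, e 2}"
    by (intro card_ge_dim_independent) (use onframe_Tsp[OF assms(2)] ind in auto)
  then obtain c d where u: "u = c *\<^sub>R e 1 + d *\<^sub>R e 2"
    using assms(3) unfolding span_insert span_singleton by (auto simp: algebra_simps)
  have "u \<bullet> e 1 = c" "u \<bullet> e 2 = d" unfolding u using o by (auto simp: inner_add_left)
  then show ?thesis by (simp add: sum_2 u)
qed

lemma onframe_trace:
  assumes "regular_at F q" "onframe F q e"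
  shows "(\<Sum>a\<in>UNIV. crd F q (e a) $ i * crd F q (e a) $ j) = inv_metric F q i j"
proof -
  have "(\<Sum>a\<in>UNIV. crd F q (e a) $ i * crd F q (e a) $ j)
      = (\<Sum>a\<in>UNIV. (dual_frame F q i \<bullet> e a) * (e a \<bullet> dual_frame F q j))"
    using crd_tangent[OF assms(1) onframe_Tsp[OF assms(2)]] by (simp add: inner_commute)
  also have "\<dots> = dual_frame F q i \<bullet> (\<Sum>a\<in>UNIV. (dual_frame F q j \<bullet> e a) *\<^sub>R e a)"
    by (simp add: inner_sum_right inner_commute mult.commute)
  also have "\<dots> = dual_frame F q i \<bullet> dual_frame F q j"
    using onframe_expand[OF assms dual_frame_in_Tsp] by simp
  finally show ?thesis using dual_frame_inner[OF assms(1)] by simp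
qed

lemma tangent_normal_basis:
  fixes N :: "nat \<Rightarrow> real^'n"
  assumes e: "onframe F q e"
    and NT: "\<And>a w. a < CARD('n) - 2 \<Longrightarrow> w \<in> Tsp F q \<Longrightarrow> N a \<bullet> w = 0"
    and NN: "\<And>a b. a < CARD('n) - 2 \<Longrightarrow> b < CARD('n) - 2 \<Longrightarrow> N a \<bullet> N b = (if a = b then 1 else 0)"
  shows "span ({e 1, e 2} \<union> N ` {..<CARD('n) - 2}) = UNIV"
proof -
  let ?m = "CARD('n) - 2"
  define B where "B = {e 1, e 2} \<union> N ` {..<?m}"
  have o: "e 1 \<bullet> e 1 = 1" "e 2 \<bullet> e 2 = 1" "e 1 \<bullet> e 2 = 0" "e 2 \<bullet> e 1 = 0"
    using e unfolding onframe_def by auto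
  have Ne: "N a \<bullet> e i = 0" "e i \<bullet> N a = 0" if "a < ?m" for a i
    using NT[OF that onframe_Tsp[OF e]] by (simp_all add: inner_commute)
  have injN: "inj_on N {..<?m}"
  proof (rule inj_onI)
    fix a b assume "a \<in> {..<?m}" "b \<in> {..<?m}" "N a = N b"
    then show "a = b" using NN[of a a] NN[of a b] by (auto split: if_splits)
  qed
  have disj: "{e 1, e 2} \<inter> N ` {..<?m} = {}"
  proof -
    have "e i \<noteq> N a" if "a < ?m" for a i
    proof
      assume "e i = N a"
      then have "N a \<bullet> N a = 0" using Ne(1)[OF that, of i] by simp
      then show False using NN[OF that that] by simp
    qed
    then show ?thesis by auto
  qed
  have indB: "independent B"
  proof (rule pairwise_orthogonal_independent)
    show "pairwise orthogonal B" unfolding pairwise_def orthogonal_def B_def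
      using o Ne NN injN by (auto simp: inj_on_def)
    show "0 \<notin> B" unfolding B_def using o NN by auto (metis NN inner_zero_left zero_neq_one)
  qed
  have ne: "e 1 \<noteq> e 2" using o by auto
  have "card {e 1, e 2} \<le> dim (UNIV :: (real^'n) set)"
    by (rule independent_card_le_dim) (use indB independent_mono[of B] in \<open>auto simp: B_def\<close>)
  then have "2 \<le> CARD('n)" using ne by simp
  moreover have "card B = 2 + ?m" unfolding B_def
    by (subst card_Un_disjoint) (use disj ne card_image[OF injN] in auto)
  ultimately have "card B = CARD('n)" by simp
  then have "UNIV \<subseteq> span B"
    by (intro card_ge_dim_independent) (use indB in auto)
  then show ?thesis unfolding B_def by auto
qed

text \<open>The difference of the two sides is orthogonal to the basis of the previous lemma.\<close>
lemma normal_part_expand: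
  fixes N :: "nat \<Rightarrow> real^'n"
  assumes r: "regular_at F q"
    and NT: "\<And>a w. a < CARD('n) - 2 \<Longrightarrow> w \<in> Tsp F q \<Longrightarrow> N a \<bullet> w = 0"
    and NN: "\<And>a b. a < CARD('n) - 2 \<Longrightarrow> b < CARD('n) - 2 \<Longrightarrow> N a \<bullet> N b = (if a = b then 1 else 0)"
  shows "y - tproj F q y = (\<Sum>a<CARD('n) - 2. (y \<bullet> N a) *\<^sub>R N a)"
proof -
  let ?m = "CARD('n) - 2"
  define e where "e = efr F q"
  have e: "onframe F q e" unfolding e_def by (rule efr_onframe[OF r])
  define z where "z = y - tproj F q y - (\<Sum>a<?m. (y \<bullet> N a) *\<^sub>R N a)"
  have ze: "z \<bullet> e i = 0" for i
  proof -
    have "(y - tproj F q y) \<bullet> e i = 0"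
      using tproj_inner[OF r onframe_Tsp[OF e]] by (simp add: inner_diff_left)
    moreover have "(\<Sum>a<?m. (y \<bullet> N a) *\<^sub>R N a) \<bullet> e i = 0"
      using NT[OF _ onframe_Tsp[OF e]] by (simp add: inner_sum_left)
    ultimately show ?thesis unfolding z_def by (simp add: inner_diff_left)
  qed
  have zN: "z \<bullet> N b = 0" if "b < ?m" for b
  proof -
    have "tproj F q y \<bullet> N b = 0" using NT[OF that tproj_in_Tsp[OF r]] by (simp add: inner_commute)
    moreover have "(\<Sum>a<?m. (y \<bullet> N a) *\<^sub>R N a) \<bullet> N b = y \<bullet> N b"
      using that by (simp add: inner_sum_left NN if_distrib cong: if_cong)
    ultimately show ?thesis unfolding z_def by (simp add: inner_diff_left)
  qed
  have "orthogonal z z"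
    by (rule orthogonal_to_span[of z "{e 1, e 2} \<union> N ` {..<?m}"])
      (use tangent_normal_basis[OF e NT NN] ze zN in \<open>auto simp: orthogonal_def\<close>)
  then have "z = 0" by (simp add: orthogonal_def)
  then show ?thesis by (simp add: z_def)
qed

section \<open>Algebraic identities for symmetric \<open>2\<times>2\<close> matrices\<close>

text \<open>Derivative of a trace against the inverse of a symmetric \<open>2\<times>2\<close> matrix \<open>G\<close>, written with
  cofactors \<open>Gi = G\<^sup>-\<^sup>1\<close>: if \<open>tr(G\<^sup>-\<^sup>1 S) = WF/2\<close> (hypothesis \<open>c2\<close>, multiplied by \<open>det G\<close>) and
  \<open>dS, dG, dD\<close> are derivatives of \<open>S, G, det G\<close> satisfying the differentiated identity \<open>c3\<close>
  (with \<open>E\<close> the derivative of \<open>WF\<close>), then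
  \<open>tr(G\<^sup>-\<^sup>1 dS) = E/2 + tr(G\<^sup>-\<^sup>1 dG G\<^sup>-\<^sup>1 S)\<close>, i.e. \<open>d(G\<^sup>-\<^sup>1) = -G\<^sup>-\<^sup>1 dG G\<^sup>-\<^sup>1\<close>.\<close>
lemma inverse_trace_derivative:
  fixes G S dG dS :: "2 \<Rightarrow> 2 \<Rightarrow> real" and WF D E dD :: real and Gi :: "2 \<Rightarrow> 2 \<Rightarrow> real"
  assumes D: "D = G 1 1 * G 2 2 - G 1 2 * G 1 2" "D \<noteq> 0"
    and Gi: "Gi 1 1 = G 2 2 / D" "Gi 2 2 = G 1 1 / D" "Gi 1 2 = - G 1 2 / D" "Gi 2 1 = - G 1 2 / D"
    and Ssym: "S 2 1 = S 1 2" and dGsym: "dG 2 1 = dG 1 2"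
    and dD: "dD = dG 1 1 * G 2 2 + G 1 1 * dG 2 2 - 2 * G 1 2 * dG 1 2"
    and c2: "G 2 2 * S 1 1 - G 1 2 * (S 1 2 + S 2 1) + G 1 1 * S 2 2 = D * WF / 2"
    and c3: "dG 2 2 * S 1 1 + G 2 2 * dS 1 1 - (dG 1 2 * (S 1 2 + S 2 1) + G 1 2 * (dS 1 2 + dS 2 1))
        + dG 1 1 * S 2 2 + G 1 1 * dS 2 2 = dD * WF / 2 + D * E / 2"
  shows "(\<Sum>i\<in>UNIV. \<Sum>j\<in>UNIV. Gi i j * dS i j)
       = E / 2 + (\<Sum>i\<in>UNIV. \<Sum>j\<in>UNIV. \<Sum>a\<in>UNIV. \<Sum>b\<in>UNIV. Gi i a * dG a b * Gi b j * S i j)"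
proof -
  define A :: "2 \<Rightarrow> 2 \<Rightarrow> real" where "A i j = Gi i j * D" for i j
  have A: "A 1 1 = G 2 2" "A 2 2 = G 1 1" "A 1 2 = - G 1 2" "A 2 1 = - G 1 2"
    unfolding A_def Gi using D(2) by simp_all
  have GiA: "Gi i j = A i j / D" for i j unfolding A_def using D(2) by simp
  define N1 where "N1 = G 2 2 * dS 1 1 - G 1 2 * (dS 1 2 + dS 2 1) + G 1 1 * dS 2 2"
  define T where "T = G 2 2 * S 1 1 - G 1 2 * (S 1 2 + S 2 1) + G 1 1 * S 2 2"
  define M where "M = dG 2 2 * S 1 1 - dG 1 2 * (S 1 2 + S 2 1) + dG 1 1 * S 2 2"
  define N2 where "N2 = (\<Sum>i\<in>UNIV. \<Sum>j\<in>UNIV. \<Sum>a\<in>UNIV. \<Sum>b\<in>UNIV. A i a * dG a b * A b j * S i j)"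
  have e: "N1 = dD * WF / 2 + D * E / 2 - M" unfolding N1_def M_def using c3 by linarith
  have WF: "D * WF = 2 * T" unfolding T_def using c2 by (simp add: field_simps)
  have L: "(\<Sum>i\<in>UNIV. \<Sum>j\<in>UNIV. Gi i j * dS i j) = N1 / D"
    unfolding sum_2 GiA A N1_def by (simp add: add_divide_distrib diff_divide_distrib algebra_simps)
  have R: "(\<Sum>i\<in>UNIV. \<Sum>j\<in>UNIV. \<Sum>a\<in>UNIV. \<Sum>b\<in>UNIV. Gi i a * dG a b * Gi b j * S i j) = N2 / (D * D)"
    unfolding GiA N2_def by (simp add: sum_divide_distrib)
  have P: "dD * T - D * M = N2"
    unfolding N2_def sum_2 A dD T_def M_def D(1) Ssym dGsym by (simp add: algebra_simps)
  have "D * N1 = D * D * E / 2 + N2"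
  proof -
    have "D * N1 = dD * (D * WF) / 2 + D * D * E / 2 - D * M" unfolding e by (simp add: algebra_simps)
    also have "\<dots> = D * D * E / 2 + (dD * T - D * M)" unfolding WF by (simp add: algebra_simps)
    finally show ?thesis unfolding P .
  qed
  then have "N1 / D = E / 2 + N2 / (D * D)" using D(2) by (simp add: field_simps)
  then show ?thesis unfolding L R .
qed


text \<open>The index contraction behind the drift Laplacian of a GHF.  Here \<open>Wt\<close>, \<open>C\<close>, \<open>B\<close> stand for
  \<open><\<partial>\<^sub>i\<partial>\<^sub>jW, \<partial>\<^sub>kF>\<close>, \<open><\<partial>\<^sub>i\<partial>\<^sub>jF, \<partial>\<^sub>kF>\<close>, \<open><\<partial>\<^sub>jW, \<partial>\<^sub>i\<partial>\<^sub>kF>\<close>, \<open>BN\<close> for the normal part of \<open>B\<close>,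
  \<open>xb, xN\<close> for the tangential and normal parts of \<open><\<partial>\<^sub>kW, x>\<close>.  Using the symmetry \<open>c1\<close> of
  \<open>\<partial>\<^sub>iS\<^sub>j\<^sub>k\<close> in \<open>j, k\<close> and the differentiated trace identity \<open>tr\<close>, all tangential terms cancel.\<close>
lemma drift_laplacian_contraction:
  fixes Gi S :: "2 \<Rightarrow> 2 \<Rightarrow> real" and Wt C B BN :: "2 \<Rightarrow> 2 \<Rightarrow> 2 \<Rightarrow> real"
    and xb xN w Wx :: "2 \<Rightarrow> real"
  assumes Gisym: "Gi 2 1 = Gi 1 2" and Ssym: "S 2 1 = S 1 2"
    and Wsym: "\<And>a b c. Wt a b c = Wt b a c" and Csym: "\<And>a b c. C a b c = C b a c"
    and hB: "\<And>j i k. B j i k = (\<Sum>a\<in>UNIV. C i k a * (\<Sum>b\<in>UNIV. Gi a b * S j b)) + BN j i k"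
    and c1: "\<And>i j k. Wt i j k + B j i k = Wt i k j + B k i j"
    and tr: "(\<Sum>i\<in>UNIV. \<Sum>j\<in>UNIV. Gi i j * (Wt k i j + B i k j)) = (Wx k + w k) / 2
        + (\<Sum>i\<in>UNIV. \<Sum>j\<in>UNIV. \<Sum>a\<in>UNIV. \<Sum>b\<in>UNIV. Gi i a * (C k a b + C k b a) * Gi b j * S i j)"
    and hx: "Wx k = (\<Sum>a\<in>UNIV. xb a * (\<Sum>b\<in>UNIV. Gi a b * S k b)) + xN k"
  shows "(\<Sum>i\<in>UNIV. \<Sum>j\<in>UNIV. Gi i j * (Wt i j k
            - (\<Sum>a\<in>UNIV. (\<Sum>b\<in>UNIV. Gi a b * C i j b) * S a k)
            - (\<Sum>a\<in>UNIV. (\<Sum>b\<in>UNIV. Gi a b * C i k b) * S j a) + B j i k))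
         - (1/2) * (\<Sum>i\<in>UNIV. (\<Sum>b\<in>UNIV. Gi i b * xb b) * S i k)
       = w k / 2 + xN k / 2 + (\<Sum>i\<in>UNIV. \<Sum>j\<in>UNIV. Gi i j * (BN k i j - BN i k j))"
proof -
  \<comment> \<open>move the free index \<open>k\<close> of \<open>Wt\<close> to the front, so the trace identity applies\<close>
  have Wt_swap: "Gi i j * Wt i j k = Gi i j * Wt k i j + Gi i j * (B k i j - B j i k)" for i j
  proof -
    have "Wt i j k = Wt k i j + B k i j - B j i k" using c1[of i j k] Wsym[of i k j] by linarith
    then show ?thesis by (metis (no_types) add_diff_eq distrib_left)
  qed
  have Wt_contracted: "(\<Sum>i\<in>UNIV. \<Sum>j\<in>UNIV. Gi i j * Wt i j k) = (\<Sum>i\<in>UNIV. \<Sum>j\<in>UNIV. Gi i j * Wt k i j)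
      + (\<Sum>i\<in>UNIV. \<Sum>j\<in>UNIV. Gi i j * (B k i j - B j i k))"
    unfolding Wt_swap by (simp add: sum.distrib)
  have Wt_trace: "(\<Sum>i\<in>UNIV. \<Sum>j\<in>UNIV. Gi i j * Wt k i j) = (Wx k + w k) / 2
        + (\<Sum>i\<in>UNIV. \<Sum>j\<in>UNIV. \<Sum>a\<in>UNIV. \<Sum>b\<in>UNIV. Gi i a * (C k a b + C k b a) * Gi b j * S i j)
        - (\<Sum>i\<in>UNIV. \<Sum>j\<in>UNIV. Gi i j * B i k j)"
    using tr by (simp add: algebra_simps sum.distrib)
  have expand: "(\<Sum>i\<in>UNIV. \<Sum>j\<in>UNIV. Gi i j * (Wt i j k
            - (\<Sum>a\<in>UNIV. (\<Sum>b\<in>UNIV. Gi a b * C i j b) * S a k)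
            - (\<Sum>a\<in>UNIV. (\<Sum>b\<in>UNIV. Gi a b * C i k b) * S j a) + B j i k))
       = (\<Sum>i\<in>UNIV. \<Sum>j\<in>UNIV. Gi i j * Wt i j k)
         - (\<Sum>i\<in>UNIV. \<Sum>j\<in>UNIV. Gi i j * (\<Sum>a\<in>UNIV. (\<Sum>b\<in>UNIV. Gi a b * C i j b) * S a k))
         - (\<Sum>i\<in>UNIV. \<Sum>j\<in>UNIV. Gi i j * (\<Sum>a\<in>UNIV. (\<Sum>b\<in>UNIV. Gi a b * C i k b) * S j a))
         + (\<Sum>i\<in>UNIV. \<Sum>j\<in>UNIV. Gi i j * B j i k)"
    by (simp add: algebra_simps sum.distrib sum_subtractf)
  \<comment> \<open>with the tangential/normal splittings \<open>hB\<close>, \<open>hx\<close>, only normal terms survive\<close>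
  have cancellation: "(\<Sum>i\<in>UNIV. \<Sum>j\<in>UNIV. Gi i j * (B k i j - B j i k))
        + (\<Sum>i\<in>UNIV. \<Sum>j\<in>UNIV. \<Sum>a\<in>UNIV. \<Sum>b\<in>UNIV. Gi i a * (C k a b + C k b a) * Gi b j * S i j)
        - (\<Sum>i\<in>UNIV. \<Sum>j\<in>UNIV. Gi i j * B i k j)
        - (\<Sum>i\<in>UNIV. \<Sum>j\<in>UNIV. Gi i j * (\<Sum>a\<in>UNIV. (\<Sum>b\<in>UNIV. Gi a b * C i j b) * S a k))
        - (\<Sum>i\<in>UNIV. \<Sum>j\<in>UNIV. Gi i j * (\<Sum>a\<in>UNIV. (\<Sum>b\<in>UNIV. Gi a b * C i k b) * S j a))
        + (\<Sum>i\<in>UNIV. \<Sum>j\<in>UNIV. Gi i j * B j i k)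
        + Wx k / 2 - (1/2) * (\<Sum>i\<in>UNIV. (\<Sum>b\<in>UNIV. Gi i b * xb b) * S i k)
      = xN k / 2 + (\<Sum>i\<in>UNIV. \<Sum>j\<in>UNIV. Gi i j * (BN k i j - BN i k j))"
  proof (cases "k = 1")
    case True
    show ?thesis using hx unfolding True hB sum_2 Gisym Ssym Csym[of 2 1] by (simp add: algebra_simps)
  next
    case False
    then have "k = 2" using exhaust_2[of k] by simp
    show ?thesis using hx unfolding \<open>k = 2\<close> hB sum_2 Gisym Ssym Csym[of 2 1] by (simp add: algebra_simps)
  qed
  show ?thesis using expand Wt_contracted Wt_trace cancellation by argo
qed


text \<open>Gauss-equation contraction for a symmetric \<open>2\<times>2\<close> form \<open>a\<close>:
  \<open>g\<^sup>i\<^sup>j (a(W,\<partial>\<^sub>k) a\<^sub>i\<^sub>j - a(W,\<partial>\<^sub>i) a\<^sub>k\<^sub>j) = (det a / det g) <W,\<partial>\<^sub>k>\<close>.\<close>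
lemma gauss_contraction:
  fixes G a Gi :: "2 \<Rightarrow> 2 \<Rightarrow> real" and Wc :: "2 \<Rightarrow> real" and D :: real
  assumes D: "D = G 1 1 * G 2 2 - G 1 2 * G 1 2" "D \<noteq> 0"
    and Gsym: "G 2 1 = G 1 2" and asym: "a 2 1 = a 1 2"
    and Gi: "Gi 1 1 = G 2 2 / D" "Gi 2 2 = G 1 1 / D" "Gi 1 2 = - G 1 2 / D" "Gi 2 1 = - G 1 2 / D"
  shows "(\<Sum>i\<in>UNIV. \<Sum>j\<in>UNIV. Gi i j * ((\<Sum>m\<in>UNIV. Wc m * a k m) * a i j - (\<Sum>m\<in>UNIV. Wc m * a i m) * a k j))
     = (a 2 2 * a 1 1 - a 1 2 * a 1 2) / D * (\<Sum>m\<in>UNIV. Wc m * G m k)"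
proof -
  have k: "k = 1 \<or> k = 2" by (rule exhaust_2)
  then show ?thesis
  proof
    assume k: "k = 1"
    show ?thesis unfolding k sum_2 Gi Gsym asym using D(2)
      by (simp add: field_simps; (simp add: D(1) algebra_simps)?)
  next
    assume k: "k = 2"
    show ?thesis unfolding k sum_2 Gi Gsym asym using D(2)
      by (simp add: field_simps; (simp add: D(1) algebra_simps)?)
  qed
qed

text \<open>Cayley-Hamilton for a symmetric form \<open>a\<close> relative to the metric \<open>G\<close>:
  \<open>tr\<^sub>G(a) a(W,v) - (det a / det G) <W,v> = a(W, G\<^sup>-\<^sup>1 a(\<cdot>, v))\<close>.\<close>
lemma cayley_hamilton_2:
  fixes G a Gi :: "2 \<Rightarrow> 2 \<Rightarrow> real" and Wc vc :: "2 \<Rightarrow> real" and D :: real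
  assumes D: "D = G 1 1 * G 2 2 - G 1 2 * G 1 2" "D \<noteq> 0"
    and Gsym: "G 2 1 = G 1 2" and asym: "a 2 1 = a 1 2"
    and Gi: "Gi 1 1 = G 2 2 / D" "Gi 2 2 = G 1 1 / D" "Gi 1 2 = - G 1 2 / D" "Gi 2 1 = - G 1 2 / D"
  shows "(\<Sum>i\<in>UNIV. \<Sum>k\<in>UNIV. Gi i k * a i k) * (\<Sum>i\<in>UNIV. \<Sum>k\<in>UNIV. Wc i * vc k * a i k)
      - (a 2 2 * a 1 1 - a 1 2 * a 1 2) / D * (\<Sum>k\<in>UNIV. vc k * (\<Sum>m\<in>UNIV. Wc m * G m k))
     = (\<Sum>i\<in>UNIV. \<Sum>p\<in>UNIV. \<Sum>q\<in>UNIV. \<Sum>k\<in>UNIV. Wc i * a i p * Gi p q * a q k * vc k)"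
  unfolding sum_2 Gi Gsym asym using D(2)
  by (simp add: field_simps; (simp add: D(1) algebra_simps)?)

section \<open>Gaussian harmonic one-forms in coordinates\<close>

locale immersed_patch =
  fixes U :: "(real^2) set" and F :: "real^2 \<Rightarrow> real^'n"
  assumes immersion: "immersion U F"
begin

lemma open_U: "open U"
  using immersion unfolding immersion_def by auto

lemma smooth_F: "smooth_on2 U F"
  using immersion unfolding immersion_def by auto

lemma regular: "q \<in> U \<Longrightarrow> regular_at F q"
  using immersion unfolding immersion_def regular_at_def by auto

lemma pd_pd_F_sym: "p \<in> U \<Longrightarrow> pd (pd F j) i p = pd (pd F i) j p"
  using smooth_clairaut[OF smooth_F open_U] by simp

end

definition omega_coeff :: "(real^2 \<Rightarrow> real^'n) \<Rightarrow> (real^2 \<Rightarrow> real^'n) \<Rightarrow> real^2 \<Rightarrow> 2 \<Rightarrow> 2 \<Rightarrow> real" where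
  "omega_coeff W F q i j = pd W i q \<bullet> pd F j q"

definition W2_coeff :: "(real^2 \<Rightarrow> real^'n) \<Rightarrow> (real^2 \<Rightarrow> real^'n) \<Rightarrow> real^2 \<Rightarrow> 2 \<Rightarrow> 2 \<Rightarrow> 2 \<Rightarrow> real" where
  "W2_coeff W F p i j k = pd (pd W j) i p \<bullet> pd F k p"

definition christoffel1 :: "(real^2 \<Rightarrow> real^'n) \<Rightarrow> real^2 \<Rightarrow> 2 \<Rightarrow> 2 \<Rightarrow> 2 \<Rightarrow> real" where
  "christoffel1 F p i j b = pd (pd F j) i p \<bullet> pd F b p"

definition cross_coeff :: "(real^2 \<Rightarrow> real^'n) \<Rightarrow> (real^2 \<Rightarrow> real^'n) \<Rightarrow> real^2 \<Rightarrow> 2 \<Rightarrow> 2 \<Rightarrow> 2 \<Rightarrow> real" where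
  "cross_coeff W F p j i k = pd W j p \<bullet> pd (pd F k) i p"

text \<open>The normal part of the mixed terms, \<open><\<partial>\<^sub>jW, (\<partial>\<^sub>i\<partial>\<^sub>kF)\<^sup>N>\<close>; it carries the curvature.\<close>
definition normal_cross :: "(real^2 \<Rightarrow> real^'n) \<Rightarrow> (real^2 \<Rightarrow> real^'n) \<Rightarrow> real^2 \<Rightarrow> 2 \<Rightarrow> 2 \<Rightarrow> 2 \<Rightarrow> real" where
  "normal_cross W F p j i k = pd W j p \<bullet> (pd (pd F k) i p - tproj F p (pd (pd F k) i p))"

lemma crd_chr:
  assumes "regular_at F p"
  shows "crd F p (chr F p i j) $ a = (\<Sum>b\<in>UNIV. inv_metric F p a b * christoffel1 F p i j b)"
proof -
  have "crd F p (chr F p i j) $ a = pd (pd F j) i p \<bullet> dual_frame F p a"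
    unfolding chr_def crd_tangent[OF assms tproj_in_Tsp[OF assms]] by (rule tproj_inner[OF assms dual_frame_in_Tsp])
  then show ?thesis unfolding dual_frame_def christoffel1_def by (simp add: inner_sum_right)
qed

lemma cross_coeff_split:
  assumes "regular_at F p"
  shows "cross_coeff W F p j i k
     = (\<Sum>a\<in>UNIV. christoffel1 F p i k a * (\<Sum>b\<in>UNIV. inv_metric F p a b * omega_coeff W F p j b))
       + normal_cross W F p j i k"
proof -
  have "pd W j p \<bullet> tproj F p (pd (pd F k) i p)
      = (\<Sum>a\<in>UNIV. christoffel1 F p i k a * (\<Sum>b\<in>UNIV. inv_metric F p a b * omega_coeff W F p j b))"
    unfolding tproj_eq[OF assms] dual_frame_def christoffel1_def omega_coeff_def
    by (simp add: inner_sum_right sum_distrib_left mult.commute)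
  then show ?thesis unfolding cross_coeff_def normal_cross_def by (simp add: inner_diff_right)
qed

lemma position_split:
  assumes "regular_at F p"
  shows "pd W k p \<bullet> F p = (\<Sum>a\<in>UNIV. (F p \<bullet> pd F a p) * (\<Sum>b\<in>UNIV. inv_metric F p a b * omega_coeff W F p k b))
     + pd W k p \<bullet> (F p - tproj F p (F p))"
proof -
  have "pd W k p \<bullet> tproj F p (F p)
      = (\<Sum>a\<in>UNIV. (F p \<bullet> pd F a p) * (\<Sum>b\<in>UNIV. inv_metric F p a b * omega_coeff W F p k b))"
    unfolding tproj_eq[OF assms] dual_frame_def omega_coeff_def
    by (simp add: inner_sum_right sum_distrib_left mult.commute)
  then show ?thesis by (simp add: inner_diff_right)
qed

locale ghf_patch = immersed_patch U F for U :: "(real^2) set" and F :: "real^2 \<Rightarrow> real^'n" +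
  fixes W :: "real^2 \<Rightarrow> real^'n" and om :: "real^2 \<Rightarrow> real^'n \<Rightarrow> real"
  assumes smooth_W: "smooth_on2 U W"
    and W_tangent: "\<forall>q\<in>U. W q \<in> Tsp F q"
    and om_dual: "\<forall>q\<in>U. \<forall>u\<in>Tsp F q. om q u = W q \<bullet> u"
    and ghf: "GHF U F om"
begin

lemma differentiable_omega_coeff: "p \<in> U \<Longrightarrow> (\<lambda>q. omega_coeff W F q a b) differentiable (at p)"
  unfolding omega_coeff_def
  by (intro differentiable_inner smooth_pd_differentiable[OF smooth_W open_U] smooth_pd_differentiable[OF smooth_F open_U])

lemma pd_omega_coeff:
  "p \<in> U \<Longrightarrow> pd (\<lambda>q. omega_coeff W F q i j) k p = W2_coeff W F p k i j + cross_coeff W F p i k j"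
  unfolding omega_coeff_def W2_coeff_def cross_coeff_def
  by (subst pd_inner) (use smooth_pd_differentiable[OF smooth_F open_U] smooth_pd_differentiable[OF smooth_W open_U] in auto)

text \<open>Since \<open>W\<close> is tangent, \<open>(\<nabla>\<^sub>u\<omega>)(w) = <\<nabla>\<^sup>E\<^sub>uW, w>\<close>: the Christoffel term of \<open>nab1\<close> only sees
  the tangential part of \<open>\<partial>\<^sub>i\<partial>\<^sub>jF\<close>.\<close>
lemma nab1_coeff:
  assumes q: "q \<in> U"
  shows "nab1 F om q u w = (\<Sum>i\<in>UNIV. \<Sum>j\<in>UNIV. crd F q u $ i * crd F q w $ j * omega_coeff W F q i j)"
proof -
  have r: "regular_at F q" using regular[OF q] .
  have "pd (\<lambda>r. om r (pd F j r)) i q - om q (chr F q i j) = pd W i q \<bullet> pd F j q" for i j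
  proof -
    have "pd (\<lambda>r. om r (pd F j r)) i q = pd (\<lambda>r. W r \<bullet> pd F j r) i q"
      by (rule pd_local[OF open_U q]) (use om_dual pd_in_Tsp in blast)
    also have "\<dots> = pd W i q \<bullet> pd F j q + W q \<bullet> pd (pd F j) i q"
      by (rule pd_inner)
        (use smooth_differentiable[OF smooth_W open_U q] smooth_pd_differentiable[OF smooth_F open_U q] in auto)
    finally have "pd (\<lambda>r. om r (pd F j r)) i q = pd W i q \<bullet> pd F j q + W q \<bullet> pd (pd F j) i q" .
    moreover have "om q (chr F q i j) = W q \<bullet> pd (pd F j) i q"
      unfolding chr_def using om_dual W_tangent q tproj_in_Tsp[OF r] tproj_inner'[OF r] by auto
    ultimately show ?thesis by simp
  qed
  then show ?thesis unfolding nab1_def omega_coeff_def by simp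
qed

lemma nab1_pd:
  "q \<in> U \<Longrightarrow> nab1 F om q (pd F j q) (pd F k q) = omega_coeff W F q j k"
  unfolding nab1_coeff using regular exhaust_2[of j] exhaust_2[of k] by (auto simp: crd_pd sum_2)

text \<open>The drift Laplacian in coordinates (valid for any one-form dual to a tangent field).\<close>
lemma Lop_coeff:
  assumes p: "p \<in> U"
  shows "Lop F om p v = (\<Sum>k\<in>UNIV. crd F p v $ k * (
     (\<Sum>i\<in>UNIV. \<Sum>j\<in>UNIV. inv_metric F p i j * (W2_coeff W F p i j k
            - (\<Sum>a\<in>UNIV. (\<Sum>b\<in>UNIV. inv_metric F p a b * christoffel1 F p i j b) * omega_coeff W F p a k)
            - (\<Sum>a\<in>UNIV. (\<Sum>b\<in>UNIV. inv_metric F p a b * christoffel1 F p i k b) * omega_coeff W F p j a)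
            + cross_coeff W F p j i k))
         - (1/2) * (\<Sum>i\<in>UNIV. (\<Sum>b\<in>UNIV. inv_metric F p i b * (F p \<bullet> pd F b p)) * omega_coeff W F p i k)))"
proof -
  have r: "regular_at F p" using regular[OF p] .
  define Q where "Q i j k = W2_coeff W F p i j k
            - (\<Sum>a\<in>UNIV. (\<Sum>b\<in>UNIV. inv_metric F p a b * christoffel1 F p i j b) * omega_coeff W F p a k)
            - (\<Sum>a\<in>UNIV. (\<Sum>b\<in>UNIV. inv_metric F p a b * christoffel1 F p i k b) * omega_coeff W F p j a)
            + cross_coeff W F p j i k" for i j k
  have nab2_coeff: "pd (\<lambda>q. nab1 F om q (pd F j q) (pd F k q)) i p - nab1 F om p (chr F p i j) (pd F k p)
        - nab1 F om p (pd F j p) (chr F p i k) = Q i j k" for i j k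
  proof -
    have "pd (\<lambda>q. nab1 F om q (pd F j q) (pd F k q)) i p = pd (\<lambda>q. omega_coeff W F q j k) i p"
      by (rule pd_local[OF open_U p]) (rule nab1_pd)
    moreover have "nab1 F om p (chr F p i j) (pd F k p)
        = (\<Sum>a\<in>UNIV. (\<Sum>b\<in>UNIV. inv_metric F p a b * christoffel1 F p i j b) * omega_coeff W F p a k)"
      unfolding nab1_coeff[OF p] crd_pd[OF r] crd_chr[OF r] using exhaust_2[of k] by (auto simp: sum_2)
    moreover have "nab1 F om p (pd F j p) (chr F p i k)
        = (\<Sum>a\<in>UNIV. (\<Sum>b\<in>UNIV. inv_metric F p a b * christoffel1 F p i k b) * omega_coeff W F p j a)"
      unfolding nab1_coeff[OF p] crd_pd[OF r] crd_chr[OF r] using exhaust_2[of j] by (auto simp: sum_2)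
    ultimately show ?thesis unfolding Q_def pd_omega_coeff[OF p] by simp
  qed
  have x_crd: "crd F p (tproj F p (F p)) $ i = (\<Sum>b\<in>UNIV. inv_metric F p i b * (F p \<bullet> pd F b p))" for i
  proof -
    have "crd F p (tproj F p (F p)) $ i = F p \<bullet> dual_frame F p i"
      unfolding crd_tangent[OF r tproj_in_Tsp[OF r]] by (rule tproj_inner[OF r dual_frame_in_Tsp])
    then show ?thesis unfolding dual_frame_def by (simp add: inner_sum_right)
  qed
  have "Lop F om p v = (\<Sum>a\<in>UNIV. \<Sum>i\<in>UNIV. \<Sum>j\<in>UNIV. \<Sum>k\<in>UNIV.
          crd F p (efr F p a) $ i * crd F p (efr F p a) $ j * crd F p v $ k * Q i j k)
      - (1/2) * (\<Sum>i\<in>UNIV. \<Sum>k\<in>UNIV. crd F p (tproj F p (F p)) $ i * crd F p v $ k * omega_coeff W F p i k)"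
  proof -
    have "nab2 F (nab1 F om) p u u v
        = (\<Sum>i\<in>UNIV. \<Sum>j\<in>UNIV. \<Sum>k\<in>UNIV. crd F p u $ i * crd F p u $ j * crd F p v $ k * Q i j k)" for u
      unfolding nab2_def using nab2_coeff by (simp add: algebra_simps)
    then show ?thesis unfolding Lop_def nab1_coeff[OF p] by simp
  qed
  also have "\<dots> = (\<Sum>k\<in>UNIV. crd F p v $ k * ((\<Sum>i\<in>UNIV. \<Sum>j\<in>UNIV. inv_metric F p i j * Q i j k)
         - (1/2) * (\<Sum>i\<in>UNIV. crd F p (tproj F p (F p)) $ i * omega_coeff W F p i k)))"
    unfolding onframe_trace[OF r efr_onframe[OF r], symmetric] sum_2 by (simp add: algebra_simps)
  finally show ?thesis unfolding x_crd Q_def .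
qed

lemma omega_coeff_sym: "q \<in> U \<Longrightarrow> omega_coeff W F q i j = omega_coeff W F q j i"
  using ghf nab1_pd pd_in_Tsp unfolding GHF_def by metis

lemma omega_coeff_trace:
  assumes q: "q \<in> U"
  shows "(\<Sum>i\<in>UNIV. \<Sum>j\<in>UNIV. inv_metric F q i j * omega_coeff W F q i j) = (W q \<bullet> F q) / 2"
proof -
  have r: "regular_at F q" using regular[OF q] .
  have "trT F q (nab1 F om q) = (\<Sum>i\<in>UNIV. \<Sum>j\<in>UNIV. inv_metric F q i j * omega_coeff W F q i j)"
    unfolding trT_def nab1_coeff[OF q] onframe_trace[OF r efr_onframe[OF r], symmetric] sum_2
    by (simp add: algebra_simps)
  moreover have "om q (tproj F q (F q)) = W q \<bullet> F q"
    using om_dual q tproj_in_Tsp[OF r] tproj_inner'[OF r] W_tangent by auto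
  ultimately show ?thesis using ghf q unfolding GHF_def by auto
qed

text \<open>The trace condition multiplied by \<open>det g\<close>, a form that is easy to differentiate.\<close>
lemma omega_coeff_trace_cofactor:
  assumes q: "q \<in> U"
  shows "first_ff F q 2 2 * omega_coeff W F q 1 1 - first_ff F q 1 2 * (omega_coeff W F q 1 2 + omega_coeff W F q 2 1)
      + first_ff F q 1 1 * omega_coeff W F q 2 2 = metric_det F q * (W q \<bullet> F q) / 2"
proof -
  have d: "metric_det F q \<noteq> 0" using metric_det_pos[OF regular[OF q]] by simp
  have "(first_ff F q 2 2 * omega_coeff W F q 1 1 - first_ff F q 1 2 * (omega_coeff W F q 1 2 + omega_coeff W F q 2 1)
      + first_ff F q 1 1 * omega_coeff W F q 2 2) / metric_det F q = (W q \<bullet> F q) / 2"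
    unfolding omega_coeff_trace[OF q, symmetric] sum_2 inv_metric_def
    by (simp add: add_divide_distrib diff_divide_distrib algebra_simps)
  then show ?thesis using d by (simp add: field_simps)
qed

lemma pd_omega_coeff_sym:
  assumes p: "p \<in> U"
  shows "W2_coeff W F p i j k + cross_coeff W F p j i k = W2_coeff W F p i k j + cross_coeff W F p k i j"
proof -
  have "pd (\<lambda>q. omega_coeff W F q j k - omega_coeff W F q k j) i p = 0"
    by (rule pd_zero_on[OF open_U p]) (use omega_coeff_sym in auto)
  then show ?thesis
    using pd_diff[OF differentiable_omega_coeff[OF p] differentiable_omega_coeff[OF p], of j k k j i]
    unfolding pd_omega_coeff[OF p] by simp
qed

lemma pd_omega_coeff_trace:
  fixes k :: 2
  assumes p: "p \<in> U"
  defines "dG \<equiv> \<lambda>a b. christoffel1 F p k a b + christoffel1 F p k b a"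
    and "dS \<equiv> \<lambda>i j. W2_coeff W F p k i j + cross_coeff W F p i k j"
    and "S \<equiv> omega_coeff W F p" and "G \<equiv> first_ff F p"
  shows "dG 2 2 * S 1 1 + G 2 2 * dS 1 1 - (dG 1 2 * (S 1 2 + S 2 1) + G 1 2 * (dS 1 2 + dS 2 1))
        + dG 1 1 * S 2 2 + G 1 1 * dS 2 2
      = (dG 1 1 * G 2 2 + G 1 1 * dG 2 2 - 2 * G 1 2 * dG 1 2) * (W p \<bullet> F p) / 2
        + metric_det F p * (pd W k p \<bullet> F p + W p \<bullet> pd F k p) / 2"
proof -
  note dF = smooth_differentiable[OF smooth_F open_U p] and dW = smooth_differentiable[OF smooth_W open_U p]
  have dg: "(\<lambda>q. first_ff F q a b) differentiable (at p)" for a b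
    unfolding first_ff_def by (intro differentiable_inner smooth_pd_differentiable[OF smooth_F open_U p])
  have pg: "pd (\<lambda>q. first_ff F q a b) k p = christoffel1 F p k a b + christoffel1 F p k b a" for a b
    unfolding first_ff_def christoffel1_def
    by (subst pd_inner) (use smooth_pd_differentiable[OF smooth_F open_U p] in \<open>auto simp: inner_commute\<close>)
  have pw: "pd (\<lambda>q. W q \<bullet> F q) k p = pd W k p \<bullet> F p + W p \<bullet> pd F k p"
    by (rule pd_inner[OF dW dF])
  have dw: "(\<lambda>q. W q \<bullet> F q) differentiable (at p)" using dW dF by simp
  note ds = differentiable_omega_coeff[OF p] and ps = pd_omega_coeff[OF p]
  have "pd (\<lambda>q. first_ff F q 2 2 * omega_coeff W F q 1 1
        - first_ff F q 1 2 * (omega_coeff W F q 1 2 + omega_coeff W F q 2 1) + first_ff F q 1 1 * omega_coeff W F q 2 2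
      - (1/2) * ((first_ff F q 1 1 * first_ff F q 2 2 - first_ff F q 1 2 * first_ff F q 1 2) * (W q \<bullet> F q))) k p = 0"
  proof (rule pd_zero_on[OF open_U p])
    fix q assume "q \<in> U"
    from omega_coeff_trace_cofactor[OF this]
    show "first_ff F q 2 2 * omega_coeff W F q 1 1
        - first_ff F q 1 2 * (omega_coeff W F q 1 2 + omega_coeff W F q 2 1) + first_ff F q 1 1 * omega_coeff W F q 2 2
      - (1/2) * ((first_ff F q 1 1 * first_ff F q 2 2 - first_ff F q 1 2 * first_ff F q 1 2) * (W q \<bullet> F q)) = 0"
      by (simp add: metric_det_def power2_eq_square)
  qed
  then have "0 = pd (\<lambda>q. first_ff F q 2 2) k p * S 1 1 + G 2 2 * pd (\<lambda>q. omega_coeff W F q 1 1) k p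
      - (pd (\<lambda>q. first_ff F q 1 2) k p * (S 1 2 + S 2 1)
         + G 1 2 * (pd (\<lambda>q. omega_coeff W F q 1 2) k p + pd (\<lambda>q. omega_coeff W F q 2 1) k p))
      + (pd (\<lambda>q. first_ff F q 1 1) k p * S 2 2 + G 1 1 * pd (\<lambda>q. omega_coeff W F q 2 2) k p)
      - (1/2) * ((pd (\<lambda>q. first_ff F q 1 1) k p * G 2 2 + G 1 1 * pd (\<lambda>q. first_ff F q 2 2) k p
             - (pd (\<lambda>q. first_ff F q 1 2) k p * G 1 2 + G 1 2 * pd (\<lambda>q. first_ff F q 1 2) k p)) * (W p \<bullet> F p)
           + (G 1 1 * G 2 2 - G 1 2 * G 1 2) * pd (\<lambda>q. W q \<bullet> F q) k p)"
    unfolding S_def G_def by (simp add: pd_add pd_diff pd_mult pd_const pd_divide dg ds dw)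
  then show ?thesis unfolding pg ps pw dG_def dS_def S_def G_def metric_det_def power2_eq_square
    by (simp add: field_simps)
qed

lemma Lop_ghf_coeff:
  assumes p: "p \<in> U"
  shows "Lop F om p v = (\<Sum>k\<in>UNIV. crd F p v $ k * (
       (W p \<bullet> pd F k p) / 2 + (pd W k p \<bullet> (F p - tproj F p (F p))) / 2
     + (\<Sum>i\<in>UNIV. \<Sum>j\<in>UNIV. inv_metric F p i j * (normal_cross W F p k i j - normal_cross W F p i k j))))"
proof -
  have r: "regular_at F p" using regular[OF p] .
  have Ssym: "omega_coeff W F p 2 1 = omega_coeff W F p 1 2" using omega_coeff_sym[OF p] by simp
  have Wsym: "W2_coeff W F p a b c = W2_coeff W F p b a c" for a b c
    unfolding W2_coeff_def using smooth_clairaut[OF smooth_W open_U p] by simp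
  have Csym: "christoffel1 F p a b c = christoffel1 F p b a c" for a b c
    unfolding christoffel1_def using pd_pd_F_sym[OF p] by simp
  have tr: "(\<Sum>i\<in>UNIV. \<Sum>j\<in>UNIV. inv_metric F p i j * (W2_coeff W F p k i j + cross_coeff W F p i k j))
      = ((pd W k p \<bullet> F p) + (W p \<bullet> pd F k p)) / 2
        + (\<Sum>i\<in>UNIV. \<Sum>j\<in>UNIV. \<Sum>a\<in>UNIV. \<Sum>b\<in>UNIV. inv_metric F p i a
            * (christoffel1 F p k a b + christoffel1 F p k b a) * inv_metric F p b j * omega_coeff W F p i j)" for k
    by (rule inverse_trace_derivative[where G = "first_ff F p" and D = "metric_det F p" and WF = "W p \<bullet> F p"
        and dD = "(christoffel1 F p k 1 1 + christoffel1 F p k 1 1) * first_ff F p 2 2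
          + first_ff F p 1 1 * (christoffel1 F p k 2 2 + christoffel1 F p k 2 2)
          - 2 * first_ff F p 1 2 * (christoffel1 F p k 1 2 + christoffel1 F p k 2 1)"])
      (use metric_det_pos[OF r] Ssym omega_coeff_trace_cofactor[OF p] pd_omega_coeff_trace[OF p, of k]
        in \<open>simp_all add: metric_det_def power2_eq_square inv_metric_def\<close>)
  show ?thesis unfolding Lop_coeff[OF p]
    by (intro sum.cong refl arg_cong2[where f = "(*)"] drift_laplacian_contraction[where Wx = "\<lambda>k. pd W k p \<bullet> F p"]
        inv_metric_sym Ssym Wsym Csym cross_coeff_split[OF r] pd_omega_coeff_sym[OF p] tr position_split[OF r])
qed

end

section \<open>Normal frames: the Gauss and Weingarten equations\<close>

definition sff :: "(real^2 \<Rightarrow> real^'n) \<Rightarrow> (real^2 \<Rightarrow> real^'n) \<Rightarrow> real^2 \<Rightarrow> 2 \<Rightarrow> 2 \<Rightarrow> real" where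
  "sff F N p i j = pd (pd F j) i p \<bullet> N p"

locale framed_patch = immersed_patch U F for U :: "(real^2) set" and F :: "real^2 \<Rightarrow> real^'n" +
  fixes \<nu> :: "nat \<Rightarrow> real^2 \<Rightarrow> real^'n"
  assumes normal_frame: "normal_frame U F \<nu>"
begin

lemma smooth_nu: "a < CARD('n) - 2 \<Longrightarrow> smooth_on2 U (\<nu> a)"
  using normal_frame unfolding normal_frame_def by auto

lemma nu_perp: "a < CARD('n) - 2 \<Longrightarrow> q \<in> U \<Longrightarrow> w \<in> Tsp F q \<Longrightarrow> \<nu> a q \<bullet> w = 0"
  using normal_frame unfolding normal_frame_def by auto

lemma nu_orthonormal:
  "a < CARD('n) - 2 \<Longrightarrow> b < CARD('n) - 2 \<Longrightarrow> q \<in> U \<Longrightarrow> \<nu> a q \<bullet> \<nu> b q = (if a = b then 1 else 0)"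
  using normal_frame unfolding normal_frame_def by auto

lemma normal_part: "q \<in> U \<Longrightarrow> y - tproj F q y = (\<Sum>a<CARD('n) - 2. (y \<bullet> \<nu> a q) *\<^sub>R \<nu> a q)"
  by (rule normal_part_expand) (use regular nu_perp nu_orthonormal in auto)

lemma sff_sym: "p \<in> U \<Longrightarrow> sff F N p i j = sff F N p j i"
  unfolding sff_def using pd_pd_F_sym by simp

text \<open>Weingarten equation: \<open><\<partial>\<^sub>i\<nu>\<^sub>a, \<partial>\<^sub>kF> = -h\<^sup>a\<^sub>i\<^sub>k\<close>, from differentiating \<open><\<nu>\<^sub>a, \<partial>\<^sub>kF> = 0\<close>.\<close>
lemma weingarten:
  assumes p: "p \<in> U" and a: "a < CARD('n) - 2"
  shows "pd (\<nu> a) i p \<bullet> pd F k p = - sff F (\<nu> a) p i k"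
proof -
  have "pd (\<lambda>q. \<nu> a q \<bullet> pd F k q) i p = 0"
    by (rule pd_zero_on[OF open_U p]) (use nu_perp[OF a] pd_in_Tsp in blast)
  moreover have "pd (\<lambda>q. \<nu> a q \<bullet> pd F k q) i p = pd (\<nu> a) i p \<bullet> pd F k p + \<nu> a p \<bullet> pd (pd F k) i p"
    by (rule pd_inner)
      (use smooth_differentiable[OF smooth_nu[OF a] open_U p] smooth_pd_differentiable[OF smooth_F open_U p] in auto)
  ultimately show ?thesis unfolding sff_def by (simp add: inner_commute)
qed

lemma Aform_coeff:
  assumes p: "p \<in> U" and a: "a < CARD('n) - 2" and X: "X \<in> Tsp F p" and Y: "Y \<in> Tsp F p"
  shows "Aform F (\<nu> a) p X Y
    = - (\<Sum>i\<in>UNIV. \<Sum>k\<in>UNIV. (X \<bullet> dual_frame F p i) * (Y \<bullet> dual_frame F p k) * sff F (\<nu> a) p i k)"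
proof -
  have r: "regular_at F p" using regular[OF p] .
  have "pd (\<nu> a) i p \<bullet> Y = (\<Sum>k\<in>UNIV. (Y \<bullet> dual_frame F p k) * (pd (\<nu> a) i p \<bullet> pd F k p))" for i
    by (subst tangent_expand[OF r Y]) (simp add: inner_sum_right)
  then show ?thesis unfolding Aform_def ddir_def crd_tangent[OF r X]
    by (simp add: weingarten[OF p a] inner_sum_left sum_distrib_left sum_negf mult.assoc)
qed

lemma trT_Aform:
  assumes p: "p \<in> U" and a: "a < CARD('n) - 2"
  shows "trT F p (Aform F (\<nu> a) p) = - (\<Sum>i\<in>UNIV. \<Sum>k\<in>UNIV. inv_metric F p i k * sff F (\<nu> a) p i k)"
proof -
  have r: "regular_at F p" using regular[OF p] .
  have efT: "efr F p j \<in> Tsp F p" for j using onframe_Tsp[OF efr_onframe[OF r]] .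
  have frame_trace: "(\<Sum>j\<in>UNIV. (efr F p j \<bullet> dual_frame F p i) * (efr F p j \<bullet> dual_frame F p k))
      = inv_metric F p i k" for i k
    using onframe_trace[OF r efr_onframe[OF r], of i k] crd_tangent[OF r efT] by simp
  show ?thesis
    unfolding trT_def Aform_coeff[OF p a efT efT] frame_trace[symmetric] sum_2 by (simp add: algebra_simps)
qed

text \<open>For a self-shrinker \<open><x, \<nu>\<^sub>b> = 2 <H, \<nu>\<^sub>b> = 2 tr A\<^sup>\<nu>\<^sup>b\<close>.\<close>
lemma self_shrinker_position:
  assumes ss: "self_shrinker U F \<nu>" and p: "p \<in> U" and b: "b < CARD('n) - 2"
  shows "F p \<bullet> \<nu> b p = 2 * trT F p (Aform F (\<nu> b) p)"
proof -
  have "Hvec F \<nu> p \<bullet> \<nu> b p = (\<Sum>a<CARD('n) - 2. trT F p (Aform F (\<nu> a) p) * (if a = b then 1 else 0))"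
    unfolding Hvec_def inner_sum_left by (intro sum.cong refl) (simp add: nu_orthonormal[OF _ b p])
  also have "\<dots> = trT F p (Aform F (\<nu> b) p)" using b by (simp add: if_distrib cong: if_cong)
  finally have "Hvec F \<nu> p \<bullet> \<nu> b p = trT F p (Aform F (\<nu> b) p)" .
  moreover have "Hvec F \<nu> p \<bullet> \<nu> b p = (1/2) * (nproj F p (F p) \<bullet> \<nu> b p)"
    using ss p unfolding self_shrinker_def by simp
  moreover have "nproj F p (F p) \<bullet> \<nu> b p = F p \<bullet> \<nu> b p"
    using nu_perp[OF b p tproj_in_Tsp[OF regular[OF p]]]
    unfolding nproj_def by (simp add: inner_diff_right inner_commute)
  ultimately show ?thesis by simp
qed

text \<open>Derivative of a tangential projection, paired with a tangent vector: the normal part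
  \<open>\<Sum> <G, \<nu>\<^sub>a> \<nu>\<^sub>a\<close> contributes through the Weingarten equation.\<close>
lemma pd_tproj_inner:
  assumes p: "p \<in> U" and sG: "smooth_on2 U G"
  shows "pd (\<lambda>q. tproj F q (G q)) d p \<bullet> pd F c p
      = pd G d p \<bullet> pd F c p + (\<Sum>a<CARD('n) - 2. (G p \<bullet> \<nu> a p) * sff F (\<nu> a) p d c)"
proof -
  let ?m = "CARD('n) - 2"
  have dN: "\<nu> a differentiable (at p)" if "a < ?m" for a
    using smooth_differentiable[OF smooth_nu[OF that] open_U p] .
  have dG: "G differentiable (at p)" using smooth_differentiable[OF sG open_U p] .
  have dGN: "(\<lambda>q. G q \<bullet> \<nu> a q) differentiable (at p)" if "a < ?m" for a
    using dN[OF that] dG by simp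
  have dT: "(\<lambda>q. (G q \<bullet> \<nu> a q) *\<^sub>R \<nu> a q) differentiable (at p)" if "a < ?m" for a
    using dN[OF that] dGN[OF that] by simp
  have "pd (\<lambda>q. tproj F q (G q)) d p = pd (\<lambda>q. G q - (\<Sum>a<?m. (G q \<bullet> \<nu> a q) *\<^sub>R \<nu> a q)) d p"
    by (rule pd_local[OF open_U p]) (simp add: normal_part[symmetric])
  also have "\<dots> = pd G d p - (\<Sum>a<?m. pd (\<lambda>q. (G q \<bullet> \<nu> a q) *\<^sub>R \<nu> a q) d p)"
    using pd_sum[where f = "\<lambda>a q. (G q \<bullet> \<nu> a q) *\<^sub>R \<nu> a q"] dT
    by (subst pd_diff) (auto intro: dG differentiable_sum)
  also have "\<dots> = pd G d p
      - (\<Sum>a<?m. pd (\<lambda>q. G q \<bullet> \<nu> a q) d p *\<^sub>R \<nu> a p + (G p \<bullet> \<nu> a p) *\<^sub>R pd (\<nu> a) d p)"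
    by (intro arg_cong2[where f = "(-)"] refl sum.cong) (use dGN dN in \<open>auto simp: pd_scaleR\<close>)
  finally show ?thesis
    by (simp add: inner_diff_left inner_sum_left inner_add_left nu_perp[OF _ p pd_in_Tsp] weingarten[OF p] sum_negf)
qed

lemma gauss_equation:
  assumes p: "p \<in> U"
  shows "gaussK F p = (\<Sum>a<CARD('n) - 2.
      sff F (\<nu> a) p 2 2 * sff F (\<nu> a) p 1 1 - sff F (\<nu> a) p 1 2 * sff F (\<nu> a) p 1 2) / metric_det F p"
proof -
  have r: "regular_at F p" using regular[OF p] .
  have s2: "smooth_on2 U (pd (pd F 2) 2)" "smooth_on2 U (pd (pd F 2) 1)" using smooth_F smooth_pd by blast+
  have third: "pd (pd (pd F 2) 2) 1 p = pd (pd (pd F 2) 1) 2 p"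
    using smooth_clairaut[OF smooth_pd[OF smooth_F] open_U p] by simp
  have curvature_numerator: "(tproj F p (pd (\<lambda>q. tproj F q (pd (pd F 2) 2 q)) 1 p)
       - tproj F p (pd (\<lambda>q. tproj F q (pd (pd F 2) 1 q)) 2 p)) \<bullet> pd F 1 p
     = (\<Sum>a<CARD('n) - 2. sff F (\<nu> a) p 2 2 * sff F (\<nu> a) p 1 1 - sff F (\<nu> a) p 1 2 * sff F (\<nu> a) p 1 2)"
    unfolding inner_diff_left tproj_inner[OF r pd_in_Tsp] pd_tproj_inner[OF p s2(1)] pd_tproj_inner[OF p s2(2)] third
    by (simp add: sff_def[symmetric] sff_sym[OF p, of _ 2 1] sum_subtractf)
  show ?thesis unfolding gaussK_def curvature_numerator metric_det_def first_ff_def ..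
qed

end

section \<open>The drift Laplacian of a Gaussian harmonic one-form\<close>

locale framed_ghf_patch = ghf_patch U F W om + framed_patch U F \<nu>
  for U :: "(real^2) set" and F :: "real^2 \<Rightarrow> real^'n" and W om \<nu>
begin

text \<open>Normal components of \<open>\<partial>\<^sub>kW\<close>: differentiating \<open><W, \<nu>\<^sub>a> = 0\<close> and using Weingarten,
  \<open><\<partial>\<^sub>kW, \<nu>\<^sub>a> = W\<^sup>m h\<^sup>a\<^sub>k\<^sub>m\<close>.\<close>
lemma pd_W_normal:
  assumes p: "p \<in> U" and a: "a < CARD('n) - 2"
  shows "pd W k p \<bullet> \<nu> a p = (\<Sum>m\<in>UNIV. (W p \<bullet> dual_frame F p m) * sff F (\<nu> a) p k m)"
proof -
  have "pd (\<lambda>q. W q \<bullet> \<nu> a q) k p = 0"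
    by (rule pd_zero_on[OF open_U p]) (use nu_perp[OF a] W_tangent in \<open>auto simp: inner_commute\<close>)
  moreover have "pd (\<lambda>q. W q \<bullet> \<nu> a q) k p = pd W k p \<bullet> \<nu> a p + W p \<bullet> pd (\<nu> a) k p"
    by (rule pd_inner)
      (use smooth_differentiable[OF smooth_nu[OF a] open_U p] smooth_differentiable[OF smooth_W open_U p] in auto)
  moreover have "W p \<bullet> pd (\<nu> a) k p = (\<Sum>m\<in>UNIV. (W p \<bullet> dual_frame F p m) *\<^sub>R pd F m p) \<bullet> pd (\<nu> a) k p"
    using tangent_expand[OF regular[OF p]] W_tangent p by metis
  then have "W p \<bullet> pd (\<nu> a) k p = (\<Sum>m\<in>UNIV. (W p \<bullet> dual_frame F p m) * (pd (\<nu> a) k p \<bullet> pd F m p))"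
    by (simp only: inner_sum_left inner_scaleR_left inner_commute[of "pd F _ p" "pd (\<nu> a) k p"])
  ultimately show ?thesis by (simp add: weingarten[OF p a] sum_negf)
qed

lemma normal_cross_frame:
  assumes p: "p \<in> U"
  shows "normal_cross W F p j i k
     = (\<Sum>a<CARD('n) - 2. (\<Sum>m\<in>UNIV. (W p \<bullet> dual_frame F p m) * sff F (\<nu> a) p j m) * sff F (\<nu> a) p i k)"
  unfolding normal_cross_def normal_part[OF p]
  by (simp add: inner_sum_right pd_W_normal[OF p] sff_def mult.commute)

lemma position_normal_term:
  assumes p: "p \<in> U"
  shows "pd W k p \<bullet> (F p - tproj F p (F p))
     = (\<Sum>a<CARD('n) - 2. (F p \<bullet> \<nu> a p) * (\<Sum>m\<in>UNIV. (W p \<bullet> dual_frame F p m) * sff F (\<nu> a) p k m))"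
  unfolding normal_part[OF p] by (simp add: inner_sum_right pd_W_normal[OF p])

text \<open>The curvature term of \<open>Lop_ghf_coeff\<close> is \<open>K \<omega>(\<partial>\<^sub>k)\<close>, by the Gauss equation.\<close>
lemma curvature_term:
  assumes p: "p \<in> U"
  shows "(\<Sum>i\<in>UNIV. \<Sum>j\<in>UNIV. inv_metric F p i j * (normal_cross W F p k i j - normal_cross W F p i k j))
    = gaussK F p * (W p \<bullet> pd F k p)"
proof -
  define Wc where "Wc m = W p \<bullet> dual_frame F p m" for m
  define A where "A a = sff F (\<nu> a) p" for a
  have Wk: "W p \<bullet> pd F k p = (\<Sum>m\<in>UNIV. Wc m * first_ff F p m k)"
    by (subst tangent_expand[OF regular[OF p], of "W p"])
      (use W_tangent p in \<open>auto simp: inner_sum_left first_ff_def Wc_def\<close>)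
  have per_normal: "(\<Sum>i\<in>UNIV. \<Sum>j\<in>UNIV. inv_metric F p i j
        * ((\<Sum>m\<in>UNIV. Wc m * A a k m) * A a i j - (\<Sum>m\<in>UNIV. Wc m * A a i m) * A a k j))
      = (A a 2 2 * A a 1 1 - A a 1 2 * A a 1 2) / metric_det F p * (W p \<bullet> pd F k p)" for a
    unfolding Wk
    by (rule gauss_contraction)
      (use metric_det_pos[OF regular[OF p]] sff_sym[OF p]
        in \<open>auto simp: metric_det_def power2_eq_square inv_metric_def first_ff_sym A_def\<close>)
  have "(\<Sum>i\<in>UNIV. \<Sum>j\<in>UNIV. inv_metric F p i j * (normal_cross W F p k i j - normal_cross W F p i k j))
      = (\<Sum>a<CARD('n) - 2. \<Sum>i\<in>UNIV. \<Sum>j\<in>UNIV. inv_metric F p i j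
          * ((\<Sum>m\<in>UNIV. Wc m * A a k m) * A a i j - (\<Sum>m\<in>UNIV. Wc m * A a i m) * A a k j))"
    unfolding normal_cross_frame[OF p] Wc_def[symmetric] A_def[symmetric]
    by (simp add: sum_distrib_left sum_subtractf[symmetric] right_diff_distrib sum.swap[of _ "{..<CARD('n) - 2}"])
  also have "\<dots> = gaussK F p * (W p \<bullet> pd F k p)"
    unfolding per_normal unfolding gauss_equation[OF p] A_def by (simp add: sum_divide_distrib sum_distrib_right)
  finally show ?thesis .
qed

lemma Lop_formula:
  assumes p: "p \<in> U" and v: "v \<in> Tsp F p"
  shows "Lop F om p v = gaussK F p * om p v + (1/2) * om p v
           - (\<Sum>a<CARD('n) - 2. (F p \<bullet> \<nu> a p) / 2 * Aform F (\<nu> a) p (W p) v)"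
proof -
  have r: "regular_at F p" using regular[OF p] .
  have Wp: "W p \<in> Tsp F p" using W_tangent p by blast
  define vc where "vc k = v \<bullet> dual_frame F p k" for k
  define w where "w k = W p \<bullet> pd F k p" for k
  define N where "N a = (\<Sum>i\<in>UNIV. \<Sum>k\<in>UNIV. (W p \<bullet> dual_frame F p i) * vc k * sff F (\<nu> a) p i k)" for a
  have "om p v = W p \<bullet> (\<Sum>k\<in>UNIV. vc k *\<^sub>R pd F k p)"
    using om_dual p v tangent_expand[OF r v] unfolding vc_def by auto
  then have omv: "om p v = (\<Sum>k\<in>UNIV. vc k * w k)" by (simp add: inner_sum_right w_def)
  have Af: "Aform F (\<nu> a) p (W p) v = - N a" if "a < CARD('n) - 2" for a
    unfolding Aform_coeff[OF p that Wp v] N_def vc_def ..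
  have "Lop F om p v = (\<Sum>k\<in>UNIV. vc k * (w k / 2 + pd W k p \<bullet> (F p - tproj F p (F p)) / 2 + gaussK F p * w k))"
    unfolding Lop_ghf_coeff[OF p] curvature_term[OF p] crd_tangent[OF r v] vc_def w_def by simp
  also have "\<dots> = gaussK F p * (\<Sum>k\<in>UNIV. vc k * w k) + (1/2) * (\<Sum>k\<in>UNIV. vc k * w k)
      + (\<Sum>a<CARD('n) - 2. (F p \<bullet> \<nu> a p) / 2 * N a)"
    unfolding position_normal_term[OF p] N_def sum_2
    by (simp add: algebra_simps sum_distrib_left sum_divide_distrib add_divide_distrib sum.distrib
        sff_sym[OF p, of _ 2 1])
  finally show ?thesis unfolding omv[symmetric] by (simp add: Af sum_negf)
qed

text \<open>Inserting \<open><x,\<nu>\<^sub>\<alpha>> = 2 tr A\<^sup>\<alpha>\<close> into the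
  first formula, each normal direction contributes \<open>tr(A) A(W,v) - det(A) <W,v>\<close>, which is
  \<open>\<Sum>\<^sub>j A(W,e\<^sub>j) A(e\<^sub>j,v)\<close> by Cayley-Hamilton.\<close>
lemma Lop_self_shrinker_formula:
  assumes ss: "self_shrinker U F \<nu>" and p: "p \<in> U" and v: "v \<in> Tsp F p" and e: "onframe F p e"
  shows "Lop F om p v = (1/2) * om p v
           - (\<Sum>a<CARD('n) - 2. \<Sum>j\<in>UNIV. Aform F (\<nu> a) p (W p) (e j) * Aform F (\<nu> a) p (e j) v)"
proof -
  have r: "regular_at F p" using regular[OF p] .
  have Wp: "W p \<in> Tsp F p" using W_tangent p by blast
  have eT: "e j \<in> Tsp F p" for j using onframe_Tsp[OF e] .
  define vc where "vc k = v \<bullet> dual_frame F p k" for k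
  define Wc where "Wc m = W p \<bullet> dual_frame F p m" for m
  define A where "A a = sff F (\<nu> a) p" for a
  define K where "K a = (A a 2 2 * A a 1 1 - A a 1 2 * A a 1 2) / metric_det F p" for a
  have omv: "om p v = (\<Sum>k\<in>UNIV. vc k * (\<Sum>m\<in>UNIV. Wc m * first_ff F p m k))"
  proof -
    have "W p \<bullet> pd F k p = (\<Sum>m\<in>UNIV. Wc m * first_ff F p m k)" for k
      by (subst tangent_expand[OF r Wp]) (simp add: inner_sum_left first_ff_def Wc_def)
    moreover have "om p v = W p \<bullet> (\<Sum>k\<in>UNIV. vc k *\<^sub>R pd F k p)"
      using om_dual p v tangent_expand[OF r v] unfolding vc_def by auto
    ultimately show ?thesis by (simp add: inner_sum_right)
  qed
  have frame_trace: "(\<Sum>j\<in>UNIV. (e j \<bullet> dual_frame F p i) * (e j \<bullet> dual_frame F p k)) = inv_metric F p i k" for i k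
    using onframe_trace[OF r e, of i k] crd_tangent[OF r eT] by simp
  have per_normal: "(F p \<bullet> \<nu> a p) / 2 * Aform F (\<nu> a) p (W p) v - K a * om p v
      = (\<Sum>j\<in>UNIV. Aform F (\<nu> a) p (W p) (e j) * Aform F (\<nu> a) p (e j) v)"
    if a: "a < CARD('n) - 2" for a
  proof -
    have "(\<Sum>i\<in>UNIV. \<Sum>k\<in>UNIV. inv_metric F p i k * A a i k) * (\<Sum>i\<in>UNIV. \<Sum>k\<in>UNIV. Wc i * vc k * A a i k)
        - K a * (\<Sum>k\<in>UNIV. vc k * (\<Sum>m\<in>UNIV. Wc m * first_ff F p m k))
        = (\<Sum>i\<in>UNIV. \<Sum>s\<in>UNIV. \<Sum>q\<in>UNIV. \<Sum>k\<in>UNIV. Wc i * A a i s * inv_metric F p s q * A a q k * vc k)"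
      unfolding K_def
      by (rule cayley_hamilton_2)
        (use metric_det_pos[OF r] sff_sym[OF p]
          in \<open>auto simp: metric_det_def power2_eq_square inv_metric_def first_ff_sym A_def\<close>)
    then show ?thesis
      unfolding self_shrinker_position[OF ss p a] trT_Aform[OF p a] omv
        Aform_coeff[OF p a Wp v] Aform_coeff[OF p a Wp eT] Aform_coeff[OF p a eT v]
        frame_trace[symmetric] Wc_def[symmetric] vc_def[symmetric] A_def[symmetric] sum_2
      by (simp add: algebra_simps)
  qed
  have "gaussK F p = (\<Sum>a<CARD('n) - 2. K a)"
    unfolding gauss_equation[OF p] K_def A_def by (simp add: sum_divide_distrib)
  then have "Lop F om p v = (1/2) * om p v
      - (\<Sum>a<CARD('n) - 2. (F p \<bullet> \<nu> a p) / 2 * Aform F (\<nu> a) p (W p) v - K a * om p v)"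
    unfolding Lop_formula[OF p v] by (simp add: sum_subtractf sum_distrib_right)
  also have "\<dots> = (1/2) * om p v
      - (\<Sum>a<CARD('n) - 2. \<Sum>j\<in>UNIV. Aform F (\<nu> a) p (W p) (e j) * Aform F (\<nu> a) p (e j) v)"
    by (intro arg_cong2[where f = "(-)"] refl sum.cong per_normal) simp
  finally show ?thesis .
qed

end

theorem lemma1p1:
  fixes U :: "(real^2) set" and F :: "real^2 \<Rightarrow> real^'n"
    and om :: "real^2 \<Rightarrow> real^'n \<Rightarrow> real" and W :: "real^2 \<Rightarrow> real^'n"
    and \<nu> :: "nat \<Rightarrow> real^2 \<Rightarrow> real^'n" and e :: "2 \<Rightarrow> real^'n"
    and p :: "real^2" and v :: "real^'n"
  assumes "immersion U F"
    and "smooth_on2 U W"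
    and "\<forall>q\<in>U. W q \<in> Tsp F q"
    and "\<forall>q\<in>U. \<forall>u\<in>Tsp F q. om q u = W q \<bullet> u"
    and "GHF U F om"
    and "normal_frame U F \<nu>"
    and "p \<in> U"
    and "v \<in> Tsp F p"
    and "onframe F p e"
  shows "(Lop F om p v = gaussK F p * om p v + (1/2) * om p v
           - (\<Sum>a<CARD('n) - 2. (F p \<bullet> \<nu> a p) / 2 * Aform F (\<nu> a) p (W p) v))
      \<and> (self_shrinker U F \<nu> \<longrightarrow>
         Lop F om p v = (1/2) * om p v
           - (\<Sum>a<CARD('n) - 2. \<Sum>j\<in>UNIV. Aform F (\<nu> a) p (W p) (e j) * Aform F (\<nu> a) p (e j) v))"
proof -
  interpret framed_ghf_patch U F W om \<nu>
    by unfold_locales (use assms(1-6) in auto)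
  show ?thesis
    using Lop_formula[OF assms(7,8)] Lop_self_shrinker_formula[OF _ assms(7,8,9)] by blast
qed

end
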